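(* Let $B=\{B_t,\ t\ge0\}$ be a centered Gaussian process with stationary increments, $B_0=0$, and let $T>0$. Suppose Assumption 1 holds: the covariance function has a mixed derivative $\frac{\partial^2}{\partial s\,\partial t}\mathbb{E}[B_tB_s]=K(t-s)$, where $K$ is an even function with $K\in L_1[-T,T]$. Then for every $f\in L_2[0,T]$ the integral $\int_0^T f(t)\,dB_t$ exists as the mean-square limit of the corresponding Riemann sums, and for all $f,g\in L_2[0,T]$ $$\mathbb{E}\Big[\int_0^T f(t)\,dB_t\int_0^T g(s)\,dB_s\Big]=\int_0^T f(t)\int_0^T K(t-s)g(s)\,ds\,dt.$$ *)

theory Defs
  imports "HOL-Probability.Probability"
begin

definition centered_gaussian :: "'a measure \<Rightarrow> ('a \<Rightarrow> real) \<Rightarrow> bool" where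
  "centered_gaussian M X \<longleftrightarrow> X \<in> borel_measurable M \<and>
     ((AE \<omega> in M. X \<omega> = 0) \<or> (\<exists>\<sigma>>0. distributed M lborel X (normal_density 0 \<sigma>)))"

definition centered_gaussian_process :: "'a measure \<Rightarrow> (real \<Rightarrow> 'a \<Rightarrow> real) \<Rightarrow> bool" where
  "centered_gaussian_process M B \<longleftrightarrow>
     (\<forall>I c. finite I \<longrightarrow> I \<subseteq> {0..} \<longrightarrow> centered_gaussian M (\<lambda>\<omega>. \<Sum>i\<in>I. c i * B i \<omega>))"

definition stationary_increments :: "'a measure \<Rightarrow> (real \<Rightarrow> 'a \<Rightarrow> real) \<Rightarrow> bool" where
  "stationary_increments M B \<longleftrightarrow>
     (\<forall>h\<ge>0. \<forall>I. finite I \<longrightarrow> I \<subseteq> {0..} \<longrightarrow>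
        distr M (PiM I (\<lambda>_. borel)) (\<lambda>\<omega>. \<lambda>i\<in>I. B (i + h) \<omega> - B h \<omega>)
      = distr M (PiM I (\<lambda>_. borel)) (\<lambda>\<omega>. \<lambda>i\<in>I. B i \<omega>))"

definition L2_on :: "real \<Rightarrow> (real \<Rightarrow> real) \<Rightarrow> bool" where
  "L2_on T f \<longleftrightarrow> set_borel_measurable lborel {0..T} f \<and> set_integrable lborel {0..T} (\<lambda>t. (f t)^2)"

definition partition_of :: "real \<Rightarrow> nat \<Rightarrow> (nat \<Rightarrow> real) \<Rightarrow> bool" where
  "partition_of T n p \<longleftrightarrow> p 0 = 0 \<and> p n = T \<and> (\<forall>k<n. p k < p (Suc k))"

definition step_fun :: "nat \<Rightarrow> (nat \<Rightarrow> real) \<Rightarrow> (nat \<Rightarrow> real) \<Rightarrow> real \<Rightarrow> real" where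
  "step_fun n p a t = (\<Sum>k<n. a k * indicator {p k<..p (Suc k)} t)"

definition riemann_sum :: "(real \<Rightarrow> 'a \<Rightarrow> real) \<Rightarrow> nat \<Rightarrow> (nat \<Rightarrow> real) \<Rightarrow> (nat \<Rightarrow> real) \<Rightarrow> 'a \<Rightarrow> real" where
  "riemann_sum B n p a \<omega> = (\<Sum>k<n. a k * (B (p (Suc k)) \<omega> - B (p k) \<omega>))"

definition ms_integral :: "'a measure \<Rightarrow> (real \<Rightarrow> 'a \<Rightarrow> real) \<Rightarrow> real \<Rightarrow> (real \<Rightarrow> real) \<Rightarrow> ('a \<Rightarrow> real) \<Rightarrow> bool" where
  "ms_integral M B T f X \<longleftrightarrow> X \<in> borel_measurable M \<and> integrable M (\<lambda>\<omega>. (X \<omega>)^2) \<and>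
     (\<forall>n p a. (\<forall>m. partition_of T (n m) (p m)) \<longrightarrow>
        (\<lambda>m. LBINT t:{0..T}. (step_fun (n m) (p m) (a m) t - f t)^2) \<longlonglongrightarrow> 0 \<longrightarrow>
        (\<lambda>m. \<integral>\<omega>. (riemann_sum B (n m) (p m) (a m) \<omega> - X \<omega>)^2 \<partial>M) \<longlonglongrightarrow> 0)"

end

theory Submission
  imports Defs
begin

text \<open>For a step function \<open>s = \<Sum>\<^sub>k a\<^sub>k 1\<^bsub>(p\<^sub>k, p\<^sub>k\<^sub>+\<^sub>1]\<^esub>\<close> the Riemann sum
  \<open>S(s) = \<Sum>\<^sub>k a\<^sub>k (B(p\<^sub>k\<^sub>+\<^sub>1) - B(p\<^sub>k))\<close> satisfies \<open>E[S(s) S(r)] = Q(s, r)\<close> with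
  \<open>Q(u, v) = \<integral>\<integral> u(t) K(t - s) v(s) ds dt\<close>: both sides are bilinear, and on indicators of
  \<open>[0, t]\<close> and \<open>[0, s]\<close> they agree by the covariance identity. Young's inequality gives
  \<open>|Q(u, v)| \<le> \<parallel>K\<parallel>\<^sub>1 \<parallel>u\<parallel>\<^sub>2 \<parallel>v\<parallel>\<^sub>2\<close> with \<open>\<parallel>K\<parallel>\<^sub>1\<close> taken over \<open>[-T, T]\<close>, hence
  \<open>E[(S(s) - S(r))\<^sup>2] = Q(s - r, s - r) \<le> \<parallel>K\<parallel>\<^sub>1 \<parallel>s - r\<parallel>\<^sub>2\<^sup>2\<close>. Since step functions are dense in
  \<open>L\<^sup>2[0, T]\<close>, the Riemann sums along any approximating sequence are Cauchy in \<open>L\<^sup>2(P)\<close>; their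
  limit exists by completeness, does not depend on the sequence, and the covariance formula passes
  to the limit because both \<open>E[X Y]\<close> and \<open>Q\<close> are continuous.\<close>

section \<open>Real inequalities and limits\<close>

lemma abs_mult_le_half_sum_squares: "\<bar>x * y\<bar> \<le> (x\<^sup>2 + y\<^sup>2) / (2::real)"
proof -
  have "0 \<le> (\<bar>x\<bar> - \<bar>y\<bar>)\<^sup>2" by simp
  then show ?thesis by (simp add: power2_diff power2_abs abs_mult)
qed

lemma power2_le_if_abs_le: "\<bar>x\<bar> \<le> c \<Longrightarrow> x\<^sup>2 \<le> (c::real)\<^sup>2"
  by (metis abs_ge_zero order_trans power2_abs power_mono)

lemma square_diff_le_twice: "(x - z)\<^sup>2 \<le> 2 * (x - y)\<^sup>2 + 2 * (y - (z::real))\<^sup>2"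
proof -
  have "2 * (x - y)\<^sup>2 + 2 * (y - z)\<^sup>2 - (x - z)\<^sup>2 = (x - 2 * y + z)\<^sup>2"
    by (simp add: power2_eq_square algebra_simps)
  then show ?thesis by (smt (verit) zero_le_power2)
qed

text \<open>The infimum of \<open>A x + B / x\<close> over \<open>x > 0\<close> is \<open>2 \<surd>(A B)\<close>; this turns bounds that are
  quadratic under rescaling into Cauchy--Schwarz type bounds.\<close>
lemma le_two_sqrt_mult_if_le_scaled_sums:
  fixes q A B :: real
  assumes "A \<ge> 0" "B \<ge> 0" and le: "\<And>x. x > 0 \<Longrightarrow> q \<le> A * x + B / x"
  shows "q \<le> 2 * sqrt (A * B)"
proof (cases "A > 0 \<and> B > 0")
  case True
  define x where "x = sqrt (B / A)"
  have "x > 0" using True by (simp add: x_def)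
  moreover have "A * x = sqrt (A * B)" "B / x = sqrt (A * B)" using True
    by (simp_all add: x_def real_sqrt_divide real_sqrt_mult field_simps)
  ultimately show ?thesis using le[of x] by simp
next
  case False
  then have "A * B = 0" using assms by auto
  show ?thesis
  proof (rule ccontr)
    assume "\<not> ?thesis"
    then have q: "q > 0" using \<open>A * B = 0\<close> by simp
    define x where "x = (if A = 0 then (2 * B + 1) / q else q / (2 * A + 1))"
    have "x > 0" using q assms by (auto simp: x_def intro!: divide_pos_pos)
    have "A * x + B / x < q"
    proof (cases "A = 0")
      case True
      have "B / x = B * q / (2 * B + 1)" using True q assms by (simp add: x_def)
      also have "\<dots> < q" using q assms by (simp add: divide_less_eq algebra_simps add_pos_nonneg)
      finally show ?thesis using True by simp
    next
      case False
      then have "B = 0" using \<open>A * B = 0\<close> by simp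
      have "A * x = A * q / (2 * A + 1)" using False by (simp add: x_def)
      also have "\<dots> < q" using q assms by (simp add: divide_less_eq algebra_simps add_pos_nonneg)
      finally show ?thesis using \<open>B = 0\<close> by simp
    qed
    then show False using le[OF \<open>x > 0\<close>] by simp
  qed
qed

lemma Cauchy_bound_if_le_add:
  assumes le: "\<And>m k. d m k \<le> a m + a k" and a: "a \<longlonglongrightarrow> (0::real)" and "e > 0"
  shows "\<exists>N. \<forall>m\<ge>N. \<forall>k\<ge>N. d m k < e"
proof -
  obtain N where N: "\<And>m. m \<ge> N \<Longrightarrow> \<bar>a m\<bar> < e / 2"
    using LIMSEQ_D[OF a, of "e / 2"] \<open>e > 0\<close> by auto
  have "d m k < e" if "m \<ge> N" "k \<ge> N" for m k
    using le[of m k] N[OF that(1)] N[OF that(2)] by (simp add: abs_less_iff)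
  then show ?thesis by blast
qed

lemma LIMSEQ_if_abs_diff_le_bilinear:
  fixes x :: "nat \<Rightarrow> real"
  assumes "a \<longlonglongrightarrow> 0" "b \<longlonglongrightarrow> 0"
    and "\<And>m. \<bar>x m - x0\<bar> \<le> c * (sqrt (a m) * sqrt (b m) + sqrt (a m) * G + F * sqrt (b m))"
  shows "x \<longlonglongrightarrow> x0"
proof -
  have "(\<lambda>m. c * (sqrt (a m) * sqrt (b m) + sqrt (a m) * G + F * sqrt (b m)))
      \<longlonglongrightarrow> c * (sqrt 0 * sqrt 0 + sqrt 0 * G + F * sqrt 0)"
    by (intro tendsto_intros assms(1,2))
  then have "(\<lambda>m. c * (sqrt (a m) * sqrt (b m) + sqrt (a m) * G + F * sqrt (b m))) \<longlonglongrightarrow> 0"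
    by simp
  moreover have "\<forall>\<^sub>F m in sequentially. norm (x m - x0)
      \<le> c * (sqrt (a m) * sqrt (b m) + sqrt (a m) * G + F * sqrt (b m))"
    using assms(3) by (intro always_eventually allI) (simp only: real_norm_def)
  ultimately have "(\<lambda>m. x m - x0) \<longlonglongrightarrow> 0"
    by (rule Lim_null_comparison[rotated])
  then show ?thesis by (simp add: LIM_zero_iff)
qed

section \<open>Square-integrable random variables\<close>

definition square_integrable :: "'a measure \<Rightarrow> ('a \<Rightarrow> real) \<Rightarrow> bool" where
  "square_integrable M X \<longleftrightarrow> X \<in> borel_measurable M \<and> integrable M (\<lambda>\<omega>. (X \<omega>)\<^sup>2)"

lemma square_integrable_mult_integrable:
  assumes "square_integrable M X" "square_integrable M Y"
  shows "integrable M (\<lambda>\<omega>. X \<omega> * Y \<omega>)"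
proof (rule Bochner_Integration.integrable_bound)
  show "integrable M (\<lambda>\<omega>. ((X \<omega>)\<^sup>2 + (Y \<omega>)\<^sup>2) / 2)"
    using assms unfolding square_integrable_def by auto
  show "(\<lambda>\<omega>. X \<omega> * Y \<omega>) \<in> borel_measurable M"
    using assms unfolding square_integrable_def by auto
  show "AE \<omega> in M. norm (X \<omega> * Y \<omega>) \<le> norm (((X \<omega>)\<^sup>2 + (Y \<omega>)\<^sup>2) / 2)"
    using abs_mult_le_half_sum_squares by (intro AE_I2) auto
qed

lemma square_integrable_add:
  assumes "square_integrable M X" "square_integrable M Y"
  shows "square_integrable M (\<lambda>\<omega>. X \<omega> + Y \<omega>)"
proof -
  have "integrable M (\<lambda>\<omega>. (X \<omega>)\<^sup>2 + 2 * (X \<omega> * Y \<omega>) + (Y \<omega>)\<^sup>2)"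
    using assms square_integrable_mult_integrable[OF assms] unfolding square_integrable_def by auto
  then show ?thesis
    using assms unfolding square_integrable_def by (auto simp: power2_sum ac_simps)
qed

lemma square_integrable_cmult:
  assumes "square_integrable M X"
  shows "square_integrable M (\<lambda>\<omega>. c * X \<omega>)"
  using assms unfolding square_integrable_def by (auto simp: power_mult_distrib)

lemma square_integrable_diff:
  assumes "square_integrable M X" "square_integrable M Y"
  shows "square_integrable M (\<lambda>\<omega>. X \<omega> - Y \<omega>)"
  using square_integrable_add[OF assms(1) square_integrable_cmult[OF assms(2), of "-1"]] by simp

lemma square_integrable_sum:
  assumes "finite I" "\<And>i. i \<in> I \<Longrightarrow> square_integrable M (X i)"
  shows "square_integrable M (\<lambda>\<omega>. \<Sum>i\<in>I. X i \<omega>)"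
  using assms
proof (induction I rule: finite_induct)
  case empty
  then show ?case by (simp add: square_integrable_def)
next
  case (insert i I)
  then show ?case by (simp add: square_integrable_add)
qed

lemma integral_square_diff_le:
  assumes "square_integrable M X" "square_integrable M Y" "square_integrable M Z"
  shows "(\<integral>\<omega>. (X \<omega> - Z \<omega>)\<^sup>2 \<partial>M) \<le> 2 * (\<integral>\<omega>. (X \<omega> - Y \<omega>)\<^sup>2 \<partial>M) + 2 * (\<integral>\<omega>. (Y \<omega> - Z \<omega>)\<^sup>2 \<partial>M)"
proof -
  have i: "integrable M (\<lambda>\<omega>. (X \<omega> - Z \<omega>)\<^sup>2)" "integrable M (\<lambda>\<omega>. (X \<omega> - Y \<omega>)\<^sup>2)"
    "integrable M (\<lambda>\<omega>. (Y \<omega> - Z \<omega>)\<^sup>2)"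
    using assms square_integrable_diff unfolding square_integrable_def by blast+
  have "(\<integral>\<omega>. (X \<omega> - Z \<omega>)\<^sup>2 \<partial>M) \<le> (\<integral>\<omega>. 2 * (X \<omega> - Y \<omega>)\<^sup>2 + 2 * (Y \<omega> - Z \<omega>)\<^sup>2 \<partial>M)"
    using i by (intro integral_mono square_diff_le_twice) auto
  also have "\<dots> = 2 * (\<integral>\<omega>. (X \<omega> - Y \<omega>)\<^sup>2 \<partial>M) + 2 * (\<integral>\<omega>. (Y \<omega> - Z \<omega>)\<^sup>2 \<partial>M)"
    using i by simp
  finally show ?thesis .
qed

lemma Cauchy_Schwarz_integral:
  assumes U: "square_integrable M U" and V: "square_integrable M V"
  shows "\<bar>\<integral>\<omega>. U \<omega> * V \<omega> \<partial>M\<bar> \<le> sqrt (\<integral>\<omega>. (U \<omega>)\<^sup>2 \<partial>M) * sqrt (\<integral>\<omega>. (V \<omega>)\<^sup>2 \<partial>M)"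
proof -
  let ?A = "(\<integral>\<omega>. (U \<omega>)\<^sup>2 \<partial>M) / 2" and ?B = "(\<integral>\<omega>. (V \<omega>)\<^sup>2 \<partial>M) / 2"
  have "\<bar>\<integral>\<omega>. U \<omega> * V \<omega> \<partial>M\<bar> \<le> 2 * sqrt (?A * ?B)"
  proof (rule le_two_sqrt_mult_if_le_scaled_sums)
    fix x :: real
    assume x: "x > 0"
    have pointwise: "\<bar>U \<omega> * V \<omega>\<bar> \<le> (x * (U \<omega>)\<^sup>2 + (V \<omega>)\<^sup>2 / x) / 2" for \<omega>
      using abs_mult_le_half_sum_squares[of "sqrt x * U \<omega>" "V \<omega> / sqrt x"] x
      by (simp add: power_mult_distrib power_divide)
    have "\<bar>\<integral>\<omega>. U \<omega> * V \<omega> \<partial>M\<bar> \<le> (\<integral>\<omega>. \<bar>U \<omega> * V \<omega>\<bar> \<partial>M)"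
      by (rule integral_abs_bound)
    also have "\<dots> \<le> (\<integral>\<omega>. (x * (U \<omega>)\<^sup>2 + (V \<omega>)\<^sup>2 / x) / 2 \<partial>M)"
      using square_integrable_mult_integrable[OF U V] U V pointwise
      unfolding square_integrable_def by (intro integral_mono) auto
    also have "\<dots> = ?A * x + ?B / x"
      using U V unfolding square_integrable_def by (simp add: field_simps)
    finally show "\<bar>\<integral>\<omega>. U \<omega> * V \<omega> \<partial>M\<bar> \<le> ?A * x + ?B / x" .
  qed auto
  also have "\<dots> = sqrt (\<integral>\<omega>. (U \<omega>)\<^sup>2 \<partial>M) * sqrt (\<integral>\<omega>. (V \<omega>)\<^sup>2 \<partial>M)"
    by (simp add: real_sqrt_mult real_sqrt_divide)
  finally show ?thesis .
qed

lemma integral_mult_tendsto_if_mean_square: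
  assumes U: "\<And>m. square_integrable M (U m)" and V: "\<And>m. square_integrable M (V m)"
    and X: "square_integrable M X" and Y: "square_integrable M Y"
    and UX: "(\<lambda>m. \<integral>\<omega>. (U m \<omega> - X \<omega>)\<^sup>2 \<partial>M) \<longlonglongrightarrow> 0"
    and VY: "(\<lambda>m. \<integral>\<omega>. (V m \<omega> - Y \<omega>)\<^sup>2 \<partial>M) \<longlonglongrightarrow> 0"
  shows "(\<lambda>m. \<integral>\<omega>. U m \<omega> * V m \<omega> \<partial>M) \<longlonglongrightarrow> (\<integral>\<omega>. X \<omega> * Y \<omega> \<partial>M)"
  using UX VY
proof (rule LIMSEQ_if_abs_diff_le_bilinear)
  fix m
  let ?E = "\<lambda>Z. sqrt (\<integral>\<omega>. (Z \<omega>)\<^sup>2 \<partial>M)"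
  have dU: "square_integrable M (\<lambda>\<omega>. U m \<omega> - X \<omega>)" and dV: "square_integrable M (\<lambda>\<omega>. V m \<omega> - Y \<omega>)"
    using U V X Y by (auto intro: square_integrable_diff)
  have i: "integrable M (\<lambda>\<omega>. U m \<omega> * V m \<omega>)" "integrable M (\<lambda>\<omega>. U m \<omega> * Y \<omega>)"
    "integrable M (\<lambda>\<omega>. X \<omega> * V m \<omega>)" "integrable M (\<lambda>\<omega>. X \<omega> * Y \<omega>)"
    using U V X Y by (auto intro: square_integrable_mult_integrable)
  have "(\<integral>\<omega>. (U m \<omega> - X \<omega>) * (V m \<omega> - Y \<omega>) \<partial>M)
      = (\<integral>\<omega>. U m \<omega> * V m \<omega> \<partial>M) - (\<integral>\<omega>. U m \<omega> * Y \<omega> \<partial>M) - (\<integral>\<omega>. X \<omega> * V m \<omega> \<partial>M) + (\<integral>\<omega>. X \<omega> * Y \<omega> \<partial>M)"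
    "(\<integral>\<omega>. (U m \<omega> - X \<omega>) * Y \<omega> \<partial>M) = (\<integral>\<omega>. U m \<omega> * Y \<omega> \<partial>M) - (\<integral>\<omega>. X \<omega> * Y \<omega> \<partial>M)"
    "(\<integral>\<omega>. X \<omega> * (V m \<omega> - Y \<omega>) \<partial>M) = (\<integral>\<omega>. X \<omega> * V m \<omega> \<partial>M) - (\<integral>\<omega>. X \<omega> * Y \<omega> \<partial>M)"
    using i by (simp_all add: left_diff_distrib right_diff_distrib)
  then have "(\<integral>\<omega>. U m \<omega> * V m \<omega> \<partial>M) - (\<integral>\<omega>. X \<omega> * Y \<omega> \<partial>M)
      = (\<integral>\<omega>. (U m \<omega> - X \<omega>) * (V m \<omega> - Y \<omega>) \<partial>M) + (\<integral>\<omega>. (U m \<omega> - X \<omega>) * Y \<omega> \<partial>M)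
        + (\<integral>\<omega>. X \<omega> * (V m \<omega> - Y \<omega>) \<partial>M)"
    by simp
  then have "\<bar>(\<integral>\<omega>. U m \<omega> * V m \<omega> \<partial>M) - (\<integral>\<omega>. X \<omega> * Y \<omega> \<partial>M)\<bar>
      \<le> ?E (\<lambda>\<omega>. U m \<omega> - X \<omega>) * ?E (\<lambda>\<omega>. V m \<omega> - Y \<omega>) + ?E (\<lambda>\<omega>. U m \<omega> - X \<omega>) * ?E Y
        + ?E X * ?E (\<lambda>\<omega>. V m \<omega> - Y \<omega>)"
    using Cauchy_Schwarz_integral[OF dU dV] Cauchy_Schwarz_integral[OF dU Y]
      Cauchy_Schwarz_integral[OF X dV] by linarith
  then show "\<bar>(\<integral>\<omega>. U m \<omega> * V m \<omega> \<partial>M) - (\<integral>\<omega>. X \<omega> * Y \<omega> \<partial>M)\<bar>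
      \<le> 1 * (sqrt (\<integral>\<omega>. (U m \<omega> - X \<omega>)\<^sup>2 \<partial>M) * sqrt (\<integral>\<omega>. (V m \<omega> - Y \<omega>)\<^sup>2 \<partial>M)
        + sqrt (\<integral>\<omega>. (U m \<omega> - X \<omega>)\<^sup>2 \<partial>M) * ?E Y + ?E X * sqrt (\<integral>\<omega>. (V m \<omega> - Y \<omega>)\<^sup>2 \<partial>M))"
    by simp
qed

lemma nn_integral_abs_le_sqrt_second_moment:
  assumes "prob_space M" and X: "square_integrable M X"
  shows "(\<integral>\<^sup>+\<omega>. ennreal \<bar>X \<omega>\<bar> \<partial>M) \<le> ennreal (sqrt (\<integral>\<omega>. (X \<omega>)\<^sup>2 \<partial>M))"
proof -
  interpret prob_space M by fact
  have "square_integrable M (\<lambda>\<omega>. \<bar>X \<omega>\<bar>)" "square_integrable M (\<lambda>_. 1)"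
    using X unfolding square_integrable_def by auto
  from Cauchy_Schwarz_integral[OF this] have "(\<integral>\<omega>. \<bar>X \<omega>\<bar> \<partial>M) \<le> sqrt (\<integral>\<omega>. (X \<omega>)\<^sup>2 \<partial>M)"
    by (simp add: prob_space)
  moreover have "integrable M (\<lambda>\<omega>. \<bar>X \<omega>\<bar>)"
    using X unfolding square_integrable_def by (auto intro: square_integrable_imp_integrable)
  ultimately show ?thesis
    by (subst nn_integral_eq_integral) (auto intro: ennreal_leI)
qed

lemma AE_convergent_if_fast_mean_square_Cauchy:
  assumes "prob_space M" and Z: "\<And>j. square_integrable M (Z j)"
    and fast: "\<And>j. (\<integral>\<omega>. (Z (Suc j) \<omega> - Z j \<omega>)\<^sup>2 \<partial>M) \<le> (1/16)^j"
  shows "AE \<omega> in M. convergent (\<lambda>j. Z j \<omega>)"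
proof -
  define d where "d j \<omega> = Z (Suc j) \<omega> - Z j \<omega>" for j \<omega>
  have d: "square_integrable M (d j)" for j
    unfolding d_def by (intro square_integrable_diff Z)
  have [measurable]: "d j \<in> borel_measurable M" for j
    using d unfolding square_integrable_def by auto
  have L1: "(\<integral>\<^sup>+\<omega>. ennreal \<bar>d j \<omega>\<bar> \<partial>M) \<le> ennreal ((1/4)^j)" for j
  proof -
    have "sqrt (\<integral>\<omega>. (d j \<omega>)\<^sup>2 \<partial>M) \<le> sqrt ((1/16)^j)"
      using fast[of j] unfolding d_def by simp
    also have "\<dots> = (1/4)^j"
      by (simp add: real_sqrt_power real_sqrt_divide)
    finally show ?thesis
      using nn_integral_abs_le_sqrt_second_moment[OF \<open>prob_space M\<close> d[of j]] by (simp add: order_trans)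
  qed
  have "(\<integral>\<^sup>+\<omega>. (\<Sum>j. ennreal \<bar>d j \<omega>\<bar>) \<partial>M) = (\<Sum>j. \<integral>\<^sup>+\<omega>. ennreal \<bar>d j \<omega>\<bar> \<partial>M)"
    by (rule nn_integral_suminf) measurable
  also have "\<dots> \<le> (\<Sum>j. ennreal ((1/4)^j))"
    by (intro suminf_le L1) auto
  also have "\<dots> = ennreal (\<Sum>j. (1/4)^j)"
    by (intro suminf_ennreal2) (auto simp: summable_geometric)
  finally have "(\<integral>\<^sup>+\<omega>. (\<Sum>j. ennreal \<bar>d j \<omega>\<bar>) \<partial>M) \<noteq> \<infinity>"
    by (auto simp: top_unique)
  then have "AE \<omega> in M. (\<Sum>j. ennreal \<bar>d j \<omega>\<bar>) \<noteq> \<infinity>"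
    by (intro nn_integral_PInf_AE) measurable
  then show ?thesis
  proof eventually_elim
    case (elim \<omega>)
    then have "summable (\<lambda>j. \<bar>d j \<omega>\<bar>)"
      by (intro summable_suminf_not_top) auto
    then have "summable (\<lambda>j. d j \<omega>)"
      by (rule summable_rabs_cancel)
    then have "convergent (\<lambda>n. Z 0 \<omega> + (\<Sum>j<n. d j \<omega>))"
      by (intro convergent_add convergent_const) (simp add: summable_iff_convergent)
    moreover have "(\<lambda>n. Z 0 \<omega> + (\<Sum>j<n. d j \<omega>)) = (\<lambda>n. Z n \<omega>)"
      unfolding d_def by (simp add: sum_lessThan_telescope[where f="\<lambda>j. Z j \<omega>"])
    ultimately show ?case by simp
  qed
qed

lemma nn_integral_square_diff_le_if_AE_limit:
  assumes [measurable]: "Y \<in> borel_measurable M" "\<And>j. Z j \<in> borel_measurable M" "X \<in> borel_measurable M"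
    and lim: "AE \<omega> in M. (\<lambda>j. Z j \<omega>) \<longlonglongrightarrow> X \<omega>"
    and le: "\<And>j. j \<ge> N \<Longrightarrow> (\<integral>\<^sup>+\<omega>. ennreal ((Y \<omega> - Z j \<omega>)\<^sup>2) \<partial>M) \<le> e"
  shows "(\<integral>\<^sup>+\<omega>. ennreal ((Y \<omega> - X \<omega>)\<^sup>2) \<partial>M) \<le> e"
proof -
  have "(\<integral>\<^sup>+\<omega>. ennreal ((Y \<omega> - X \<omega>)\<^sup>2) \<partial>M) = (\<integral>\<^sup>+\<omega>. liminf (\<lambda>j. ennreal ((Y \<omega> - Z j \<omega>)\<^sup>2)) \<partial>M)"
    using lim
  proof (intro nn_integral_cong_AE, eventually_elim)
    case (elim \<omega>)
    have "(\<lambda>j. ennreal ((Y \<omega> - Z j \<omega>)\<^sup>2)) \<longlonglongrightarrow> ennreal ((Y \<omega> - X \<omega>)\<^sup>2)"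
      by (intro tendsto_ennrealI tendsto_intros elim)
    then show ?case by (rule lim_imp_Liminf[symmetric, rotated]) simp
  qed
  also have "\<dots> \<le> liminf (\<lambda>j. \<integral>\<^sup>+\<omega>. ennreal ((Y \<omega> - Z j \<omega>)\<^sup>2) \<partial>M)"
    by (rule nn_integral_liminf) measurable
  also have "\<dots> \<le> e"
    using le by (intro Liminf_le) (auto simp: eventually_sequentially)
  finally show ?thesis .
qed

lemma square_integrable_if_nn_integral_square_diff_finite:
  assumes Y: "square_integrable M Y" and [measurable]: "X \<in> borel_measurable M"
    and fin: "(\<integral>\<^sup>+\<omega>. ennreal ((Y \<omega> - X \<omega>)\<^sup>2) \<partial>M) < \<infinity>"
  shows "square_integrable M X"
proof -
  have [measurable]: "Y \<in> borel_measurable M" using Y unfolding square_integrable_def by simp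
  have "square_integrable M (\<lambda>\<omega>. Y \<omega> - X \<omega>)"
    using fin unfolding square_integrable_def by (auto intro: integrableI_bounded)
  from square_integrable_diff[OF Y this] show ?thesis by simp
qed

text \<open>Completeness of \<open>L\<^sup>2\<close> (Riesz--Fischer): the limit is the a.e.\ limit of a subsequence whose
  increments have second moments \<open>\<le> 16\<^sup>-\<^sup>j\<close>.\<close>
lemma mean_square_Cauchy_imp_limit:
  assumes M: "prob_space M" and Y: "\<And>m. square_integrable M (Y m)"
    and Cauchy: "\<And>e. e > 0 \<Longrightarrow> \<exists>N. \<forall>m\<ge>N. \<forall>k\<ge>N. (\<integral>\<omega>. (Y m \<omega> - Y k \<omega>)\<^sup>2 \<partial>M) < e"
  shows "\<exists>X. square_integrable M X \<and> (\<lambda>m. \<integral>\<omega>. (Y m \<omega> - X \<omega>)\<^sup>2 \<partial>M) \<longlonglongrightarrow> 0"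
proof -
  obtain N where N: "\<And>e m k. e > 0 \<Longrightarrow> m \<ge> N e \<Longrightarrow> k \<ge> N e \<Longrightarrow> (\<integral>\<omega>. (Y m \<omega> - Y k \<omega>)\<^sup>2 \<partial>M) < e"
    using Cauchy by metis
  have [measurable]: "Y m \<in> borel_measurable M" for m
    using Y unfolding square_integrable_def by auto
  have nn_diff: "(\<integral>\<^sup>+\<omega>. ennreal ((Y m \<omega> - Y k \<omega>)\<^sup>2) \<partial>M) = ennreal (\<integral>\<omega>. (Y m \<omega> - Y k \<omega>)\<^sup>2 \<partial>M)" for m k
    using square_integrable_diff[OF Y Y, of m k] unfolding square_integrable_def
    by (intro nn_integral_eq_integral) auto
  define r where "r j = (\<Sum>i\<le>j. N ((1/16)^i)) + j" for j
  have r_N: "N ((1/16)^j) \<le> r j" and r_ge: "j \<le> r j" and r_mono: "r j \<le> r (Suc j)" for j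
    unfolding r_def by (auto intro: trans_le_add1 member_le_sum)
  have conv: "AE \<omega> in M. convergent (\<lambda>j. Y (r j) \<omega>)"
  proof (rule AE_convergent_if_fast_mean_square_Cauchy[OF M Y])
    show "(\<integral>\<omega>. (Y (r (Suc j)) \<omega> - Y (r j) \<omega>)\<^sup>2 \<partial>M) \<le> (1/16)^j" for j
      using N[of "(1/16)^j" "r (Suc j)" "r j"] r_N[of j] r_mono[of j] by simp
  qed
  define X where "X \<omega> = lim (\<lambda>j. Y (r j) \<omega>)" for \<omega>
  have lim: "AE \<omega> in M. (\<lambda>j. Y (r j) \<omega>) \<longlonglongrightarrow> X \<omega>"
    using conv unfolding X_def by eventually_elim (simp add: convergent_LIMSEQ_iff)
  have [measurable]: "X \<in> borel_measurable M"
    unfolding X_def by measurable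
  have close: "(\<integral>\<^sup>+\<omega>. ennreal ((Y m \<omega> - X \<omega>)\<^sup>2) \<partial>M) \<le> ennreal e" if "e > 0" "m \<ge> N e" for e m
  proof (rule nn_integral_square_diff_le_if_AE_limit[OF _ _ _ lim, where N="N e"])
    fix j
    assume "j \<ge> N e"
    then show "(\<integral>\<^sup>+\<omega>. ennreal ((Y m \<omega> - Y (r j) \<omega>)\<^sup>2) \<partial>M) \<le> ennreal e"
      using N[OF that, of "r j"] r_ge[of j] unfolding nn_diff by (auto intro!: ennreal_leI)
  qed measurable
  have X: "square_integrable M X"
    using close[of 1 "N 1"]
    by (intro square_integrable_if_nn_integral_square_diff_finite[OF Y[of "N 1"]])
      (simp_all add: order_le_less_trans)
  have bound: "(\<integral>\<omega>. (Y m \<omega> - X \<omega>)\<^sup>2 \<partial>M) \<le> e" if "e > 0" "m \<ge> N e" for e m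
    using close[OF that] \<open>e > 0\<close> square_integrable_diff[OF Y X, of m] unfolding square_integrable_def
    by (subst (asm) nn_integral_eq_integral) auto
  have "(\<lambda>m. \<integral>\<omega>. (Y m \<omega> - X \<omega>)\<^sup>2 \<partial>M) \<longlonglongrightarrow> 0"
  proof (rule LIMSEQ_I)
    fix e :: real
    assume "e > 0"
    then have "norm ((\<integral>\<omega>. (Y m \<omega> - X \<omega>)\<^sup>2 \<partial>M) - 0) < e" if "m \<ge> N (e / 2)" for m
      using bound[of "e / 2" m] that by simp
    then show "\<exists>m0. \<forall>m\<ge>m0. norm ((\<integral>\<omega>. (Y m \<omega> - X \<omega>)\<^sup>2 \<partial>M) - 0) < e" by blast
  qed
  with X show ?thesis by blast
qed

lemma square_integrable_if_centered_gaussian: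
  assumes "centered_gaussian M X"
  shows "square_integrable M X"
proof -
  have X: "X \<in> borel_measurable M"
    using assms unfolding centered_gaussian_def by simp
  consider "AE \<omega> in M. X \<omega> = 0" | \<sigma> where "\<sigma> > 0" "distributed M lborel X (normal_density 0 \<sigma>)"
    using assms unfolding centered_gaussian_def by blast
  then have "integrable M (\<lambda>\<omega>. (X \<omega>)\<^sup>2)"
  proof cases
    case 1
    then have "AE \<omega> in M. 0 = (X \<omega>)\<^sup>2" by eventually_elim simp
    then show ?thesis by (rule integrable_cong_AE_imp[rotated 2]) (use X in auto)
  next
    case 2
    have "integrable lborel (\<lambda>x. normal_density 0 \<sigma> x * x\<^sup>2)"
      using integrable.intros[OF normal_moment_even[OF \<open>\<sigma> > 0\<close>, of 0 1]] by simp
    then show ?thesis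
      using distributed_integrable[OF 2(2), of "\<lambda>x. x\<^sup>2"] by (simp add: normal_density_nonneg)
  qed
  with X show ?thesis unfolding square_integrable_def by simp
qed

section \<open>Square-integrable functions on \<open>[0,T]\<close>\<close>

lemma indicator_mult_power2: "(indicator A t * x)\<^sup>2 = indicator A t * (x::real)\<^sup>2"
  by (simp add: indicator_def)

lemma integrable_indicator_Icc [simp]: "integrable lborel (indicator {a..b} :: real \<Rightarrow> real)"
  by (intro integrable_real_indicator) (auto simp: emeasure_lborel_Icc_eq)

definition sqnorm :: "real \<Rightarrow> (real \<Rightarrow> real) \<Rightarrow> real" where
  "sqnorm T u = (LBINT t:{0..T}. (u t)\<^sup>2)"

lemma L2_on_iff_square_integrable:
  "L2_on T u \<longleftrightarrow> square_integrable lborel (\<lambda>t. indicator {0..T} t * u t)"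
  unfolding L2_on_def square_integrable_def set_borel_measurable_def set_integrable_def
  by (simp add: indicator_mult_power2)

lemma sqnorm_eq: "sqnorm T u = (\<integral>t. (indicator {0..T} t * u t)\<^sup>2 \<partial>lborel)"
  unfolding sqnorm_def set_lebesgue_integral_def by (simp add: indicator_mult_power2)

lemma sqnorm_nonneg: "sqnorm T u \<ge> 0"
  unfolding sqnorm_eq by simp

lemma sqnorm_cmult: "sqnorm T (\<lambda>t. c * u t) = c\<^sup>2 * sqnorm T u"
  unfolding sqnorm_def by (simp add: power_mult_distrib)

lemma sqnorm_diff_commute: "sqnorm T (\<lambda>t. u t - v t) = sqnorm T (\<lambda>t. v t - u t)"
  unfolding sqnorm_def by (simp add: power2_commute)

lemma L2_on_measurable: "L2_on T u \<Longrightarrow> (\<lambda>t. indicator {0..T} t * u t) \<in> borel_measurable borel"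
  unfolding L2_on_iff_square_integrable square_integrable_def by simp

lemma L2_on_integrable:
  assumes "L2_on T u"
  shows "integrable lborel (\<lambda>t. indicator {0..T} t * u t)"
proof -
  have ind: "square_integrable lborel (indicator {0..T} :: real \<Rightarrow> real)"
    unfolding square_integrable_def by (simp add: indicator_mult_power2[where x=1, simplified])
  have eq: "(\<lambda>t. indicator {0..T} t * (indicator {0..T} t * u t)) = (\<lambda>t. indicator {0..T} t * u t)"
    by (auto simp: fun_eq_iff indicator_def)
  from square_integrable_mult_integrable[OF ind assms[unfolded L2_on_iff_square_integrable]]
  show ?thesis unfolding eq .
qed

lemma L2_on_diff: "L2_on T u \<Longrightarrow> L2_on T v \<Longrightarrow> L2_on T (\<lambda>t. u t - v t)"
  unfolding L2_on_iff_square_integrable by (drule (1) square_integrable_diff) (simp add: algebra_simps)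

lemma L2_on_cmult: "L2_on T u \<Longrightarrow> L2_on T (\<lambda>t. c * u t)"
  unfolding L2_on_iff_square_integrable by (drule square_integrable_cmult[of _ _ c]) (simp add: ac_simps)

lemma L2_on_lincomb:
  assumes "L2_on T u" "L2_on T v"
  shows "L2_on T (\<lambda>t. a * u t + b * v t)"
  using square_integrable_add[OF assms[unfolded L2_on_iff_square_integrable, THEN square_integrable_cmult]]
  unfolding L2_on_iff_square_integrable by (simp add: algebra_simps)

lemma L2_on_sum:
  assumes "finite I" "\<And>i. i \<in> I \<Longrightarrow> L2_on T (u i)"
  shows "L2_on T (\<lambda>t. \<Sum>i\<in>I. u i t)"
  using square_integrable_sum[OF assms(1), of lborel "\<lambda>i t. indicator {0..T} t * u i t"] assms(2)
  unfolding L2_on_iff_square_integrable by (simp add: sum_distrib_left)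

lemma L2_on_if_bounded:
  assumes m: "(\<lambda>t. indicator {0..T} t * u t) \<in> borel_measurable borel" and "\<And>t. \<bar>u t\<bar> \<le> c"
  shows "L2_on T u"
proof -
  have [measurable]: "(\<lambda>t. indicator {0..T} t * u t) \<in> borel_measurable borel" by (fact m)
  have "integrable lborel (\<lambda>t. (indicator {0..T} t * u t)\<^sup>2)"
  proof (rule Bochner_Integration.integrable_bound)
    show "integrable lborel (\<lambda>t. c\<^sup>2 * indicator {0..T} t :: real)"
      by simp
    show "AE t in lborel. norm ((indicator {0..T} t * u t)\<^sup>2) \<le> norm (c\<^sup>2 * indicator {0..T} t :: real)"
      using power2_le_if_abs_le[OF assms(2)] by (intro AE_I2) (auto simp: indicator_def)
  qed measurable
  then show ?thesis
    unfolding L2_on_iff_square_integrable square_integrable_def using m by simp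
qed

lemma L2_on_indicator: "L2_on T (indicator {0..x})"
  by (rule L2_on_if_bounded[where c=1]) (auto simp: indicator_def)

lemma L2_on_if_continuous_bounded:
  assumes "continuous_on UNIV g" "\<And>t. \<bar>g t\<bar> \<le> c"
  shows "L2_on T g"
proof (rule L2_on_if_bounded[OF _ assms(2)])
  have [measurable]: "g \<in> borel_measurable borel"
    using assms(1) by (rule borel_measurable_continuous_onI)
  show "(\<lambda>t. indicator {0..T} t * g t) \<in> borel_measurable borel" by measurable
qed

lemma sqnorm_diff_le:
  assumes "L2_on T u" "L2_on T v" "L2_on T w"
  shows "sqnorm T (\<lambda>t. u t - w t) \<le> 2 * sqnorm T (\<lambda>t. u t - v t) + 2 * sqnorm T (\<lambda>t. v t - w t)"
  using integral_square_diff_le[OF assms[unfolded L2_on_iff_square_integrable]]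
  by (simp add: sqnorm_eq right_diff_distrib)

lemma sqnorm_le_if_bounded:
  assumes u: "L2_on T u" and "T \<ge> 0" and bound: "\<And>t. 0 < t \<Longrightarrow> t \<le> T \<Longrightarrow> \<bar>u t\<bar> \<le> \<epsilon>"
  shows "sqnorm T u \<le> \<epsilon>\<^sup>2 * T"
proof -
  have "sqnorm T u \<le> (\<integral>t. \<epsilon>\<^sup>2 * indicator {0..T} t \<partial>lborel)"
    unfolding sqnorm_eq
  proof (rule integral_mono_AE)
    show "integrable lborel (\<lambda>t. (indicator {0..T} t * u t)\<^sup>2)"
      using u unfolding L2_on_iff_square_integrable square_integrable_def by simp
    have "(indicator {0..T} t * u t)\<^sup>2 \<le> \<epsilon>\<^sup>2 * indicator {0..T} t" if "t \<noteq> 0" for t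
      using that power2_le_if_abs_le[OF bound, of t] by (auto simp: indicator_def)
    then show "AE t in lborel. (indicator {0..T} t * u t)\<^sup>2 \<le> \<epsilon>\<^sup>2 * indicator {0..T} t"
      using AE_lborel_singleton[of 0] by (auto elim!: AE_mp)
  qed simp
  then show ?thesis using \<open>T \<ge> 0\<close> by simp
qed

lemma sqnorm_tendsto_0_if_dominated:
  assumes [measurable]: "\<And>n. (\<lambda>t. indicator {0..T} t * d n t) \<in> borel_measurable borel"
    and lim: "AE t in lborel. (\<lambda>n. indicator {0..T} t * d n t) \<longlonglongrightarrow> 0"
    and bound: "\<And>n t. \<bar>indicator {0..T} t * d n t\<bar> \<le> w t"
    and w: "integrable lborel (\<lambda>t. (w t)\<^sup>2)"
  shows "(\<lambda>n. sqnorm T (d n)) \<longlonglongrightarrow> 0"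
proof -
  have "(\<lambda>n. \<integral>t. (indicator {0..T} t * d n t)\<^sup>2 \<partial>lborel) \<longlonglongrightarrow> integral\<^sup>L lborel (\<lambda>t::real. 0)"
  proof (rule Bochner_Integration.integral_dominated_convergence[OF _ _ w])
    show "AE t in lborel. (\<lambda>n. (indicator {0..T} t * d n t)\<^sup>2) \<longlonglongrightarrow> 0"
      using lim by eventually_elim (auto dest: tendsto_power[where n=2])
    show "AE t in lborel. norm ((indicator {0..T} t * d n t)\<^sup>2) \<le> (w t)\<^sup>2" for n
      using power2_le_if_abs_le[OF bound] by simp
  qed measurable
  then show ?thesis by (simp add: sqnorm_eq)
qed

section \<open>Density of step functions\<close>

lemma partition_of_mono:
  assumes "partition_of T n p" "i \<le> j" "j \<le> n"
  shows "p i \<le> p j"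
  using assms(2,3)
proof (induction j rule: dec_induct)
  case (step j)
  then have "p j < p (Suc j)" using assms(1) unfolding partition_of_def by simp
  with step show ?case by simp
qed simp

lemma partition_of_range:
  assumes "partition_of T n p" "k \<le> n"
  shows "p k \<in> {0..T}"
  using partition_of_mono[OF assms(1), of 0 k] partition_of_mono[OF assms(1), of k n] assms
  unfolding partition_of_def by simp

lemma partition_of_cover:
  assumes p: "partition_of T n p" and t: "0 < t" "t \<le> T"
  obtains k where "k < n" "t \<in> {p k<..p (Suc k)}"
proof -
  have "n \<noteq> 0"
  proof
    assume "n = 0"
    then show False using p t unfolding partition_of_def by simp
  qed
  define k where "k = Max {k. k < n \<and> p k < t}"
  have S: "finite {k. k < n \<and> p k < t}" "0 \<in> {k. k < n \<and> p k < t}"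
    using p t \<open>n \<noteq> 0\<close> unfolding partition_of_def by auto
  have "k \<in> {k. k < n \<and> p k < t}" unfolding k_def using S by (intro Max_in) auto
  then have "k < n" "p k < t" by auto
  moreover have "t \<le> p (Suc k)"
  proof (cases "Suc k < n")
    case True
    then show ?thesis using Max_ge[OF S(1), of "Suc k"] unfolding k_def[symmetric] by force
  next
    case False
    then have "Suc k = n" using \<open>k < n\<close> by simp
    then show ?thesis using p t unfolding partition_of_def by simp
  qed
  ultimately show ?thesis by (intro that) auto
qed

lemma partition_of_uniform:
  assumes "T > 0" "n > 0"
  shows "partition_of T n (\<lambda>k. real k * T / real n)"
  using assms unfolding partition_of_def by (auto simp: field_simps)

lemma step_fun_eq_on_interval:
  assumes p: "partition_of T n p" and "k < n" and t: "t \<in> {p k<..p (Suc k)}"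
  shows "step_fun n p a t = a k"
proof -
  have ind: "indicator {p j<..p (Suc j)} t = (if j = k then 1 else 0 :: real)" if "j < n" for j
  proof -
    consider "j < k" | "j = k" | "k < j" by linarith
    then show ?thesis
    proof cases
      case 1
      then have "p (Suc j) \<le> p k" using p \<open>k < n\<close> by (intro partition_of_mono) auto
      then show ?thesis using 1 t by auto
    next
      case 3
      then have "p (Suc k) \<le> p j" using p \<open>j < n\<close> by (intro partition_of_mono) auto
      then show ?thesis using 3 t by auto
    qed (use t in auto)
  qed
  have "step_fun n p a t = (\<Sum>j<n. if j = k then a j else 0)"
    unfolding step_fun_def by (intro sum.cong) (simp_all add: ind)
  then show ?thesis using \<open>k < n\<close> by simp
qed

lemma step_fun_eq_sum_indicator_diff:
  assumes "partition_of T n p"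
  shows "step_fun n p a = (\<lambda>t. \<Sum>k<n. a k * (indicator {0..p (Suc k)} t - indicator {0..p k} t))"
proof -
  have "indicator {p k<..p (Suc k)} t = (indicator {0..p (Suc k)} t - indicator {0..p k} t :: real)"
    if "k < n" for k t
    using partition_of_range[OF assms, of k] assms that unfolding partition_of_def
    by (auto simp: indicator_def)
  then show ?thesis unfolding step_fun_def by (auto simp: fun_eq_iff)
qed

lemma L2_on_step_fun: "L2_on T (step_fun n p a)"
proof (rule L2_on_if_bounded)
  show "(\<lambda>t. indicator {0..T} t * step_fun n p a t) \<in> borel_measurable borel"
    unfolding step_fun_def by measurable
  show "\<bar>step_fun n p a t\<bar> \<le> (\<Sum>k<n. \<bar>a k\<bar>)" for t
    unfolding step_fun_def by (rule order_trans[OF sum_abs sum_mono]) (auto simp: indicator_def abs_mult)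
qed

definition clip :: "real \<Rightarrow> real \<Rightarrow> real" where
  "clip c x = max (- c) (min c x)"

lemma clip_bound: "c \<ge> 0 \<Longrightarrow> \<bar>clip c x\<bar> \<le> c"
  and clip_id: "\<bar>x\<bar> \<le> c \<Longrightarrow> clip c x = x"
  and clip_zero: "c \<ge> 0 \<Longrightarrow> clip c 0 = 0"
  and abs_diff_clip_le: "c \<ge> 0 \<Longrightarrow> \<bar>x - clip c x\<bar> \<le> \<bar>x\<bar>"
  unfolding clip_def by auto

lemma continuous_on_clip [continuous_intros]: "continuous_on S g \<Longrightarrow> continuous_on S (\<lambda>t. clip c (g t))"
  unfolding clip_def by (intro continuous_intros)

lemma tendsto_clip [tendsto_intros]: "(f \<longlongrightarrow> l) F \<Longrightarrow> ((\<lambda>x. clip c (f x)) \<longlongrightarrow> clip c l) F"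
  unfolding clip_def by (intro tendsto_intros)

lemma borel_measurable_clip [measurable]: "f \<in> borel_measurable N \<Longrightarrow> (\<lambda>x. clip c (f x)) \<in> borel_measurable N"
  unfolding clip_def by (intro borel_measurable_max borel_measurable_min borel_measurable_const)

lemma indicator_mult_clip: "c \<ge> 0 \<Longrightarrow> indicator A t * clip c x = clip c (indicator A t * x)"
  by (simp add: indicator_def clip_zero)

lemma L2_on_clip:
  assumes "L2_on T f" "c \<ge> 0"
  shows "L2_on T (\<lambda>t. clip c (f t))"
proof (rule L2_on_if_bounded)
  show "(\<lambda>t. indicator {0..T} t * clip c (f t)) \<in> borel_measurable borel"
    using L2_on_measurable[OF assms(1)] assms(2) by (simp add: indicator_mult_clip)
qed (use assms(2) clip_bound in auto)

lemma sqnorm_diff_clip_small: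
  assumes f: "L2_on T f" and "e > 0"
  obtains c where "c > 0" "sqnorm T (\<lambda>t. f t - clip c (f t)) < e"
proof -
  define F where "F t = indicator {0..T} t * f t" for t
  have [measurable]: "F \<in> borel_measurable borel" unfolding F_def by (rule L2_on_measurable[OF f])
  have ind_diff: "indicator {0..T} t * (f t - clip c (f t)) = F t - clip c (F t)" if "c \<ge> 0" for c t
    unfolding F_def using that by (simp add: right_diff_distrib indicator_mult_clip)
  have "(\<lambda>i. sqnorm T (\<lambda>t. f t - clip (real (Suc i)) (f t))) \<longlonglongrightarrow> 0"
  proof (rule sqnorm_tendsto_0_if_dominated[where w="\<lambda>t. \<bar>F t\<bar>"], unfold ind_diff[OF of_nat_0_le_iff])
    show "AE t in lborel. (\<lambda>i. F t - clip (real (Suc i)) (F t)) \<longlonglongrightarrow> 0"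
    proof (rule AE_I2)
      fix t
      obtain N :: nat where "\<bar>F t\<bar> \<le> real N" using real_arch_simple by blast
      then have "\<forall>i\<ge>N. F t - clip (real (Suc i)) (F t) = 0" by (auto simp: clip_id)
      then show "(\<lambda>i. F t - clip (real (Suc i)) (F t)) \<longlonglongrightarrow> 0"
        by (intro tendsto_eventually) (auto simp: eventually_sequentially)
    qed
    show "\<bar>F t - clip (real (Suc i)) (F t)\<bar> \<le> \<bar>F t\<bar>" for i t
      by (rule abs_diff_clip_le) simp
    show "integrable lborel (\<lambda>t. \<bar>F t\<bar>\<^sup>2)"
      using f unfolding L2_on_iff_square_integrable square_integrable_def F_def by simp
  qed measurable
  from LIMSEQ_D[OF this \<open>e > 0\<close>] obtain i where "sqnorm T (\<lambda>t. f t - clip (real (Suc i)) (f t)) < e"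
    using sqnorm_nonneg by fastforce
  then show ?thesis by (intro that[of "real (Suc i)"]) auto
qed

lemma AE_tendsto_continuous_approx:
  fixes H :: "real \<Rightarrow> real"
  assumes "H \<in> borel_measurable borel"
  obtains gs where "\<And>n. continuous_on UNIV (gs n)" "AE t in lborel. (\<lambda>n. gs n t) \<longlonglongrightarrow> H t"
proof -
  have "H \<in> borel_measurable lebesgue"
    by (rule measurable_completion) (use assms in simp)
  then have "H measurable_on UNIV"
    by (rule lebesgue_measurable_imp_measurable_on) simp
  then obtain N gs where N: "negligible N" and gs: "\<And>n. continuous_on UNIV (gs n)"
    and lim: "\<And>t. t \<notin> N \<Longrightarrow> (\<lambda>n. gs n t) \<longlonglongrightarrow> (if t \<in> UNIV then H t else 0)"
    unfolding measurable_on_def by blast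
  have "N \<in> null_sets lebesgue" using N by (simp add: negligible_iff_null_sets)
  then have "AE t in lebesgue. t \<notin> N"
    by (rule AE_not_in)
  then have "AE t in lborel. t \<notin> N"
    by (simp add: AE_completion_iff)
  then have "AE t in lborel. (\<lambda>n. gs n t) \<longlonglongrightarrow> H t"
    by eventually_elim (use lim in simp)
  with gs show ?thesis by (rule that)
qed

text \<open>Clipping the continuous approximants at the bound of \<open>h\<close> makes dominated convergence
  applicable.\<close>
lemma continuous_approx_L2_on:
  assumes h: "L2_on T h" and b: "\<And>t. \<bar>h t\<bar> \<le> c" and "e > 0"
  obtains g where "continuous_on UNIV g" "\<And>t. \<bar>g t\<bar> \<le> c" "sqnorm T (\<lambda>t. h t - g t) < e"
proof -
  have c: "c \<ge> 0" using b[of 0] by simp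
  define H where "H t = indicator {0..T} t * h t" for t
  have H: "H \<in> borel_measurable borel" unfolding H_def by (rule L2_on_measurable[OF h])
  obtain gs where gs: "\<And>n. continuous_on UNIV (gs n)" and lim: "AE t in lborel. (\<lambda>n. gs n t) \<longlonglongrightarrow> H t"
    by (rule AE_tendsto_continuous_approx[OF H]) blast
  define g where "g n t = clip c (gs n t)" for n t
  have g_cont: "continuous_on UNIV (g n)" for n
    unfolding g_def by (intro continuous_intros gs)
  have [measurable]: "g n \<in> borel_measurable borel" for n
    using g_cont by (rule borel_measurable_continuous_onI)
  have g_bound: "\<bar>g n t\<bar> \<le> c" for n t
    unfolding g_def using c by (rule clip_bound)
  have "(\<lambda>n. sqnorm T (\<lambda>t. h t - g n t)) \<longlonglongrightarrow> 0"
  proof (rule sqnorm_tendsto_0_if_dominated[where w="\<lambda>t. 2 * c * indicator {0..T} t"])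
    show "AE t in lborel. (\<lambda>n. indicator {0..T} t * (h t - g n t)) \<longlonglongrightarrow> 0"
      using lim
    proof eventually_elim
      case (elim t)
      have "clip c (H t) = H t"
        using b[of t] c unfolding H_def by (intro clip_id) (auto simp: indicator_def)
      then have "(\<lambda>n. g n t) \<longlonglongrightarrow> H t"
        unfolding g_def using tendsto_clip[OF elim, of c] by simp
      then have "(\<lambda>n. indicator {0..T} t * (h t - g n t)) \<longlonglongrightarrow> indicator {0..T} t * (h t - H t)"
        by (intro tendsto_intros)
      moreover have "indicator {0..T} t * (h t - H t) = 0"
        by (cases "t \<in> {0..T}") (simp_all add: H_def)
      ultimately show ?case by simp
    qed
    show "\<bar>indicator {0..T} t * (h t - g n t)\<bar> \<le> 2 * c * indicator {0..T} t" for n t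
      using b[of t] g_bound[of n t] by (auto simp: indicator_def)
    have [measurable]: "(\<lambda>t. indicator {0..T} t * h t) \<in> borel_measurable borel"
      by (rule L2_on_measurable[OF h])
    show "(\<lambda>t. indicator {0..T} t * (h t - g n t)) \<in> borel_measurable borel" for n
      by (simp add: right_diff_distrib)
  qed (simp add: power_mult_distrib indicator_mult_power2[where x=1, simplified])
  from LIMSEQ_D[OF this \<open>e > 0\<close>] obtain n where "sqnorm T (\<lambda>t. h t - g n t) < e"
    using sqnorm_nonneg by fastforce
  then show ?thesis using g_cont g_bound by (intro that[of "g n"]) auto
qed

lemma abs_step_fun_diff_le_if_fine_mesh:
  assumes part: "partition_of T n p" and mesh: "\<And>k. k < n \<Longrightarrow> p (Suc k) - p k < \<delta>"
    and \<delta>: "\<And>x x'. x \<in> {0..T} \<Longrightarrow> x' \<in> {0..T} \<Longrightarrow> dist x' x < \<delta> \<Longrightarrow> dist (g x') (g x) < \<epsilon>"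
    and t: "0 < t" "t \<le> T"
  shows "\<bar>step_fun n p (\<lambda>k. g (p (Suc k))) t - g t\<bar> \<le> \<epsilon>"
proof -
  obtain k where k: "k < n" "t \<in> {p k<..p (Suc k)}"
    using partition_of_cover[OF part t] .
  have "dist (p (Suc k)) t < \<delta>" using k mesh[of k] by (simp add: dist_real_def)
  moreover have "p (Suc k) \<in> {0..T}" using part k by (intro partition_of_range) auto
  ultimately show ?thesis
    using \<delta>[of t] t step_fun_eq_on_interval[OF part k] unfolding dist_real_def by fastforce
qed

lemma step_fun_approx_continuous:
  assumes T: "T > 0" and g: "continuous_on UNIV g" "\<And>t. \<bar>g t\<bar> \<le> c" and "e > 0"
  obtains n p a where "partition_of T n p" "sqnorm T (\<lambda>t. step_fun n p a t - g t) < e"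
proof -
  define \<epsilon> where "\<epsilon> = sqrt (e / (2 * T))"
  have "\<epsilon> > 0" using \<open>e > 0\<close> T unfolding \<epsilon>_def by simp
  have "uniformly_continuous_on {0..T} g"
    using g(1) by (intro compact_uniformly_continuous) (auto intro: continuous_on_subset)
  then obtain \<delta> where "\<delta> > 0"
    and \<delta>: "\<And>x x'. x \<in> {0..T} \<Longrightarrow> x' \<in> {0..T} \<Longrightarrow> dist x' x < \<delta> \<Longrightarrow> dist (g x') (g x) < \<epsilon>"
    using \<open>\<epsilon> > 0\<close> unfolding uniformly_continuous_on_def by metis
  define n where "n = nat \<lceil>T / \<delta>\<rceil> + 1"
  define p where "p k = real k * T / real n" for k
  have "n > 0" unfolding n_def by simp
  then have part: "partition_of T n p"
    unfolding p_def using T by (intro partition_of_uniform)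
  have "T / \<delta> < n" unfolding n_def by linarith
  then have mesh: "p (Suc k) - p k < \<delta>" for k
    using \<open>\<delta> > 0\<close> \<open>n > 0\<close> unfolding p_def by (simp add: field_simps)
  have "sqnorm T (\<lambda>t. step_fun n p (\<lambda>k. g (p (Suc k))) t - g t) \<le> \<epsilon>\<^sup>2 * T"
    using T abs_step_fun_diff_le_if_fine_mesh[OF part mesh \<delta>]
    by (intro sqnorm_le_if_bounded L2_on_diff L2_on_step_fun L2_on_if_continuous_bounded[OF g]) auto
  also have "\<dots> = e / 2" using T \<open>e > 0\<close> unfolding \<epsilon>_def by simp
  finally show ?thesis using \<open>e > 0\<close> by (intro that[OF part, of "\<lambda>k. g (p (Suc k))"]) auto
qed

text \<open>Truncate \<open>f\<close>, approximate the truncation by a continuous function and that by a step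
  function.\<close>
lemma step_fun_dense:
  assumes T: "T > 0" and f: "L2_on T f" and "e > 0"
  obtains n p a where "partition_of T n p" "sqnorm T (\<lambda>t. step_fun n p a t - f t) < e"
proof -
  obtain c where "c > 0" and fh: "sqnorm T (\<lambda>t. f t - clip c (f t)) < e / 6"
    using sqnorm_diff_clip_small[OF f, of "e / 6"] \<open>e > 0\<close> by auto
  define h where "h t = clip c (f t)" for t
  have h: "L2_on T h" "\<And>t. \<bar>h t\<bar> \<le> c"
    unfolding h_def using \<open>c > 0\<close> by (auto intro: L2_on_clip[OF f] clip_bound)
  obtain g where g: "continuous_on UNIV g" "\<And>t. \<bar>g t\<bar> \<le> c" and hg: "sqnorm T (\<lambda>t. h t - g t) < e / 24"
    using continuous_approx_L2_on[OF h, of "e / 24"] \<open>e > 0\<close> by auto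
  obtain n p a where part: "partition_of T n p" and sg: "sqnorm T (\<lambda>t. step_fun n p a t - g t) < e / 24"
    using step_fun_approx_continuous[OF T g, of "e / 24"] \<open>e > 0\<close> by auto
  have "sqnorm T (\<lambda>t. step_fun n p a t - f t)
      \<le> 2 * sqnorm T (\<lambda>t. step_fun n p a t - h t) + 2 * sqnorm T (\<lambda>t. h t - f t)"
    by (intro sqnorm_diff_le L2_on_step_fun h f)
  moreover have "sqnorm T (\<lambda>t. step_fun n p a t - h t)
      \<le> 2 * sqnorm T (\<lambda>t. step_fun n p a t - g t) + 2 * sqnorm T (\<lambda>t. g t - h t)"
    by (intro sqnorm_diff_le L2_on_step_fun h L2_on_if_continuous_bounded[OF g])
  ultimately have "sqnorm T (\<lambda>t. step_fun n p a t - f t) < e"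
    using sg hg fh sqnorm_diff_commute[of T f h] sqnorm_diff_commute[of T g h]
    unfolding h_def using \<open>e > 0\<close> by linarith
  with part show ?thesis by (rule that)
qed

lemma step_fun_approx_sequence:
  assumes "T > 0" "L2_on T f"
  obtains n p a where "\<And>m. partition_of T (n m) (p m)"
    "(\<lambda>m. sqnorm T (\<lambda>t. step_fun (n m) (p m) (a m) t - f t)) \<longlonglongrightarrow> 0"
proof -
  have "\<exists>n p a. partition_of T n p \<and> sqnorm T (\<lambda>t. step_fun n p a t - f t) < 1 / Suc m" for m
    by (rule step_fun_dense[OF assms, of "1 / Suc m"]) auto
  then obtain n p a where part: "\<And>m. partition_of T (n m) (p m)"
    and small: "\<And>m. sqnorm T (\<lambda>t. step_fun (n m) (p m) (a m) t - f t) < 1 / Suc m"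
    by metis
  have "(\<lambda>m. sqnorm T (\<lambda>t. step_fun (n m) (p m) (a m) t - f t)) \<longlonglongrightarrow> 0"
  proof (rule tendsto_sandwich[OF _ _ tendsto_const LIMSEQ_Suc[OF lim_inverse_n']])
    show "\<forall>\<^sub>F m in sequentially. 0 \<le> sqnorm T (\<lambda>t. step_fun (n m) (p m) (a m) t - f t)"
      by (simp add: sqnorm_nonneg)
    show "\<forall>\<^sub>F m in sequentially. sqnorm T (\<lambda>t. step_fun (n m) (p m) (a m) t - f t) \<le> 1 / real (Suc m)"
      using small by (simp add: less_imp_le)
  qed
  with part show ?thesis by (rule that)
qed

section \<open>The bilinear form of the kernel\<close>

locale integrable_kernel =
  fixes T :: real and K :: "real \<Rightarrow> real"
  assumes K_integrable: "set_integrable lborel {-T..T} K"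
begin

text \<open>Only the values of \<open>K\<close> on \<open>[-T,T]\<close> enter, as \<open>t - s \<in> [-T,T]\<close> for \<open>s, t \<in> [0,T]\<close>;
  the truncated kernel is integrable on the whole line, so all integrals below are over \<open>\<real>\<close>.\<close>
definition K_trunc :: "real \<Rightarrow> real" where
  "K_trunc x = indicator {-T..T} x * K x"

definition K_norm :: real where
  "K_norm = (\<integral>x. \<bar>K_trunc x\<bar> \<partial>lborel)"

definition K_conv :: "(real \<Rightarrow> real) \<Rightarrow> real \<Rightarrow> real" where
  "K_conv v t = (\<integral>s. K_trunc (t - s) * (indicator {0..T} s * v s) \<partial>lborel)"

definition K_form :: "(real \<Rightarrow> real) \<Rightarrow> (real \<Rightarrow> real) \<Rightarrow> real" where
  "K_form u v = (\<integral>t. indicator {0..T} t * u t * K_conv v t \<partial>lborel)"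

lemma integrable_K_trunc: "integrable lborel K_trunc"
  using K_integrable unfolding set_integrable_def K_trunc_def by simp

lemma borel_measurable_K_trunc [measurable]: "K_trunc \<in> borel_measurable borel"
  using borel_measurable_integrable[OF integrable_K_trunc] by simp

lemma K_trunc_eq: "t \<in> {0..T} \<Longrightarrow> s \<in> {0..T} \<Longrightarrow> K_trunc (t - s) = K (t - s)"
  by (auto simp: K_trunc_def indicator_def)

lemma K_norm_nonneg: "K_norm \<ge> 0"
  unfolding K_norm_def by simp

lemma nn_integral_K_trunc_shift:
  shows "(\<integral>\<^sup>+s. ennreal \<bar>K_trunc (t - s)\<bar> \<partial>lborel) = ennreal K_norm"
    and "(\<integral>\<^sup>+t. ennreal \<bar>K_trunc (t - s)\<bar> \<partial>lborel) = ennreal K_norm"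
proof -
  have norm: "(\<integral>\<^sup>+x. ennreal \<bar>K_trunc x\<bar> \<partial>lborel) = ennreal K_norm"
    unfolding K_norm_def using integrable_K_trunc by (intro nn_integral_eq_integral) auto
  show "(\<integral>\<^sup>+s. ennreal \<bar>K_trunc (t - s)\<bar> \<partial>lborel) = ennreal K_norm"
    using nn_integral_real_affine[of "\<lambda>x. ennreal \<bar>K_trunc x\<bar>" "-1" t] norm by simp
  show "(\<integral>\<^sup>+t. ennreal \<bar>K_trunc (t - s)\<bar> \<partial>lborel) = ennreal K_norm"
    using nn_integral_real_affine[of "\<lambda>x. ennreal \<bar>K_trunc x\<bar>" 1 "-s"] norm by simp
qed

lemma K_form_eq_double_integral:
  "(LBINT t:{0..T}. f t * (LBINT s:{0..T}. K (t - s) * g s)) = K_form f g"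
  unfolding K_form_def set_lebesgue_integral_def
proof (intro Bochner_Integration.integral_cong refl)
  fix t
  have "t \<in> {0..T} \<Longrightarrow> (LBINT s. indicator {0..T} s *\<^sub>R (K (t - s) * g s)) = K_conv g t"
    unfolding K_conv_def by (intro Bochner_Integration.integral_cong) (auto simp: K_trunc_eq indicator_def)
  then show "indicator {0..T} t *\<^sub>R (f t * (LBINT s. indicator {0..T} s *\<^sub>R (K (t - s) * g s)))
      = indicator {0..T} t * f t * K_conv g t"
    by (cases "t \<in> {0..T}") auto
qed

lemma borel_measurable_K_conv:
  assumes "L2_on T v"
  shows "K_conv v \<in> borel_measurable borel"
proof -
  have [measurable]: "(\<lambda>s. indicator {0..T} s * v s) \<in> borel_measurable borel"
    using L2_on_measurable[OF assms] .
  show ?thesis unfolding K_conv_def by measurable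
qed

lemma abs_K_conv_le:
  "ennreal \<bar>K_conv v t\<bar> \<le> (\<integral>\<^sup>+s. ennreal \<bar>K_trunc (t - s) * (indicator {0..T} s * v s)\<bar> \<partial>lborel)"
proof (cases "integrable lborel (\<lambda>s. K_trunc (t - s) * (indicator {0..T} s * v s))")
  case True
  then show ?thesis unfolding K_conv_def using integral_norm_bound_ennreal[OF True] by simp
qed (simp add: K_conv_def not_integrable_integral_eq)

lemma ennreal_abs_mult_K_conv_le:
  assumes v: "L2_on T v"
  shows "ennreal (2 * \<bar>x * K_conv v t\<bar>)
    \<le> (\<integral>\<^sup>+s. ennreal (x\<^sup>2) * ennreal \<bar>K_trunc (t - s)\<bar>
          + ennreal ((indicator {0..T} s * v s)\<^sup>2) * ennreal \<bar>K_trunc (t - s)\<bar> \<partial>lborel)"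
proof -
  define V where "V s = indicator {0..T} s * v s" for s
  have [measurable]: "V \<in> borel_measurable borel"
    unfolding V_def using L2_on_measurable[OF v] .
  have "ennreal (2 * \<bar>x * K_conv v t\<bar>) = ennreal (2 * \<bar>x\<bar>) * ennreal \<bar>K_conv v t\<bar>"
    by (simp add: abs_mult ennreal_mult mult.assoc)
  also have "\<dots> \<le> ennreal (2 * \<bar>x\<bar>) * (\<integral>\<^sup>+s. ennreal \<bar>K_trunc (t - s) * V s\<bar> \<partial>lborel)"
    unfolding V_def by (intro mult_left_mono abs_K_conv_le) simp
  also have "\<dots> = (\<integral>\<^sup>+s. ennreal (2 * \<bar>x\<bar> * \<bar>K_trunc (t - s) * V s\<bar>) \<partial>lborel)"
    by (simp add: nn_integral_cmult[symmetric] ennreal_mult)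
  also have "\<dots> \<le> (\<integral>\<^sup>+s. ennreal (x\<^sup>2) * ennreal \<bar>K_trunc (t - s)\<bar> + ennreal ((V s)\<^sup>2) * ennreal \<bar>K_trunc (t - s)\<bar> \<partial>lborel)"
  proof (intro nn_integral_mono)
    fix s
    have "2 * \<bar>x\<bar> * \<bar>V s\<bar> \<le> x\<^sup>2 + (V s)\<^sup>2"
      using abs_mult_le_half_sum_squares[of x "V s"] by (simp add: abs_mult)
    then have "\<bar>K_trunc (t - s)\<bar> * (2 * \<bar>x\<bar> * \<bar>V s\<bar>) \<le> \<bar>K_trunc (t - s)\<bar> * (x\<^sup>2 + (V s)\<^sup>2)"
      by (intro mult_left_mono) auto
    then have "ennreal (2 * \<bar>x\<bar> * \<bar>K_trunc (t - s) * V s\<bar>)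
        \<le> ennreal (x\<^sup>2 * \<bar>K_trunc (t - s)\<bar> + (V s)\<^sup>2 * \<bar>K_trunc (t - s)\<bar>)"
      by (intro ennreal_leI) (simp add: abs_mult algebra_simps)
    then show "ennreal (2 * \<bar>x\<bar> * \<bar>K_trunc (t - s) * V s\<bar>)
        \<le> ennreal (x\<^sup>2) * ennreal \<bar>K_trunc (t - s)\<bar> + ennreal ((V s)\<^sup>2) * ennreal \<bar>K_trunc (t - s)\<bar>"
      by (simp add: ennreal_mult)
  qed
  finally show ?thesis unfolding V_def .
qed

text \<open>A weak form of Young's inequality for convolution: integrate \<open>2|ab| \<le> a\<^sup>2 + b\<^sup>2\<close> against
  \<open>|K(t - s)|\<close> and use Tonelli.\<close>
lemma nn_integral_K_form_le:
  assumes u: "L2_on T u" and v: "L2_on T v"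
  shows "(\<integral>\<^sup>+t. ennreal (2 * \<bar>indicator {0..T} t * u t * K_conv v t\<bar>) \<partial>lborel)
    \<le> ennreal (K_norm * (sqnorm T u + sqnorm T v))"
proof -
  define U where "U t = indicator {0..T} t * u t" for t
  define V where "V s = indicator {0..T} s * v s" for s
  have [measurable]: "U \<in> borel_measurable borel" "V \<in> borel_measurable borel"
    unfolding U_def V_def using L2_on_measurable u v by auto
  have weighted: "(\<integral>\<^sup>+x. ennreal ((indicator {0..T} x * w x)\<^sup>2) * ennreal K_norm \<partial>lborel)
      = ennreal (K_norm * sqnorm T w)" if w: "L2_on T w" for w
  proof -
    have "integrable lborel (\<lambda>x. (indicator {0..T} x * w x)\<^sup>2)"
      using w unfolding L2_on_iff_square_integrable square_integrable_def by simp
    then have "(\<integral>\<^sup>+x. ennreal ((indicator {0..T} x * w x)\<^sup>2) \<partial>lborel) = ennreal (sqnorm T w)"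
      unfolding sqnorm_eq by (intro nn_integral_eq_integral) auto
    moreover have "(\<integral>\<^sup>+x. ennreal ((indicator {0..T} x * w x)\<^sup>2) * ennreal K_norm \<partial>lborel)
        = (\<integral>\<^sup>+x. ennreal ((indicator {0..T} x * w x)\<^sup>2) \<partial>lborel) * ennreal K_norm"
      using L2_on_measurable[OF w] by (intro nn_integral_multc) auto
    ultimately show ?thesis
      using K_norm_nonneg sqnorm_nonneg by (simp add: ennreal_mult mult.commute)
  qed
  have "(\<integral>\<^sup>+t. ennreal (2 * \<bar>U t * K_conv v t\<bar>) \<partial>lborel)
      \<le> (\<integral>\<^sup>+t. \<integral>\<^sup>+s. ennreal ((U t)\<^sup>2) * ennreal \<bar>K_trunc (t - s)\<bar> + ennreal ((V s)\<^sup>2) * ennreal \<bar>K_trunc (t - s)\<bar> \<partial>lborel \<partial>lborel)"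
    unfolding V_def by (intro nn_integral_mono ennreal_abs_mult_K_conv_le v)
  also have "\<dots> = (\<integral>\<^sup>+t. \<integral>\<^sup>+s. ennreal ((U t)\<^sup>2) * ennreal \<bar>K_trunc (t - s)\<bar> \<partial>lborel \<partial>lborel)
      + (\<integral>\<^sup>+t. \<integral>\<^sup>+s. ennreal ((V s)\<^sup>2) * ennreal \<bar>K_trunc (t - s)\<bar> \<partial>lborel \<partial>lborel)"
    by (subst nn_integral_add, measurable)+
  also have "(\<integral>\<^sup>+t. \<integral>\<^sup>+s. ennreal ((V s)\<^sup>2) * ennreal \<bar>K_trunc (t - s)\<bar> \<partial>lborel \<partial>lborel)
      = (\<integral>\<^sup>+s. \<integral>\<^sup>+t. ennreal ((V s)\<^sup>2) * ennreal \<bar>K_trunc (t - s)\<bar> \<partial>lborel \<partial>lborel)"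
    by (rule lborel_pair.Fubini'[symmetric]) measurable
  also have "(\<integral>\<^sup>+t. \<integral>\<^sup>+s. ennreal ((U t)\<^sup>2) * ennreal \<bar>K_trunc (t - s)\<bar> \<partial>lborel \<partial>lborel)
      + (\<integral>\<^sup>+s. \<integral>\<^sup>+t. ennreal ((V s)\<^sup>2) * ennreal \<bar>K_trunc (t - s)\<bar> \<partial>lborel \<partial>lborel)
      = ennreal (K_norm * sqnorm T u) + ennreal (K_norm * sqnorm T v)"
    using weighted[OF u] weighted[OF v] unfolding U_def V_def
    by (simp add: nn_integral_cmult nn_integral_K_trunc_shift)
  also have "\<dots> = ennreal (K_norm * (sqnorm T u + sqnorm T v))"
    using K_norm_nonneg sqnorm_nonneg by (simp add: distrib_left)
  finally show ?thesis unfolding U_def .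
qed

lemma integrable_K_form_integrand:
  assumes "L2_on T u" "L2_on T v"
  shows "integrable lborel (\<lambda>t. indicator {0..T} t * u t * K_conv v t)"
proof (rule integrableI_bounded)
  show "(\<lambda>t. indicator {0..T} t * u t * K_conv v t) \<in> borel_measurable lborel"
    using L2_on_measurable[OF assms(1)] borel_measurable_K_conv[OF assms(2)] by simp
  have "(\<integral>\<^sup>+t. ennreal (norm (indicator {0..T} t * u t * K_conv v t)) \<partial>lborel)
      \<le> (\<integral>\<^sup>+t. ennreal (2 * \<bar>indicator {0..T} t * u t * K_conv v t\<bar>) \<partial>lborel)"
    by (intro nn_integral_mono ennreal_leI) simp
  also have "\<dots> < \<infinity>"
    using nn_integral_K_form_le[OF assms] by (simp add: le_less_trans)
  finally show "(\<integral>\<^sup>+t. ennreal (norm (indicator {0..T} t * u t * K_conv v t)) \<partial>lborel) < \<infinity>" .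
qed

lemma abs_K_form_le:
  assumes "L2_on T u" "L2_on T v"
  shows "2 * \<bar>K_form u v\<bar> \<le> K_norm * (sqnorm T u + sqnorm T v)"
proof -
  have "ennreal (2 * \<bar>K_form u v\<bar>) = ennreal (norm (\<integral>t. 2 * (indicator {0..T} t * u t * K_conv v t) \<partial>lborel))"
    unfolding K_form_def by simp
  also have "\<dots> \<le> (\<integral>\<^sup>+t. ennreal (norm (2 * (indicator {0..T} t * u t * K_conv v t))) \<partial>lborel)"
    using integrable_K_form_integrand[OF assms] by (intro integral_norm_bound_ennreal) simp
  also have "\<dots> \<le> ennreal (K_norm * (sqnorm T u + sqnorm T v))"
    using nn_integral_K_form_le[OF assms] by (simp add: abs_mult)
  finally show ?thesis
    using K_norm_nonneg sqnorm_nonneg by (subst (asm) ennreal_le_iff) (auto intro: add_nonneg_nonneg)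
qed

lemma AE_integrable_K_conv_integrand:
  assumes "L2_on T v"
  shows "AE t in lborel. integrable lborel (\<lambda>s. K_trunc (t - s) * (indicator {0..T} s * v s))"
proof -
  define V where "V s = indicator {0..T} s * v s" for s
  have [measurable]: "V \<in> borel_measurable borel"
    unfolding V_def by (rule L2_on_measurable[OF assms])
  have "(\<integral>\<^sup>+t. \<integral>\<^sup>+s. ennreal \<bar>K_trunc (t - s) * V s\<bar> \<partial>lborel \<partial>lborel)
      = (\<integral>\<^sup>+s. \<integral>\<^sup>+t. ennreal \<bar>V s\<bar> * ennreal \<bar>K_trunc (t - s)\<bar> \<partial>lborel \<partial>lborel)"
    by (subst lborel_pair.Fubini') (simp_all add: abs_mult ennreal_mult mult.commute)
  also have "\<dots> = (\<integral>\<^sup>+s. ennreal \<bar>V s\<bar> \<partial>lborel) * ennreal K_norm"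
    by (simp add: nn_integral_cmult nn_integral_K_trunc_shift nn_integral_multc)
  also have "\<dots> < \<infinity>"
    using L2_on_integrable[OF assms] unfolding V_def integrable_iff_bounded
    by (simp add: ennreal_mult_less_top)
  finally have "AE t in lborel. (\<integral>\<^sup>+s. ennreal \<bar>K_trunc (t - s) * V s\<bar> \<partial>lborel) \<noteq> \<infinity>"
    by (intro nn_integral_PInf_AE) auto
  then have "AE t in lborel. integrable lborel (\<lambda>s. K_trunc (t - s) * V s)"
    by eventually_elim (intro integrableI_bounded, measurable, simp add: less_top)
  then show ?thesis unfolding V_def .
qed

lemma K_form_lincomb_left:
  assumes "L2_on T u1" "L2_on T u2" "L2_on T v"
  shows "K_form (\<lambda>t. a * u1 t + b * u2 t) v = a * K_form u1 v + b * K_form u2 v"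
  using integrable_K_form_integrand[OF assms(1,3)] integrable_K_form_integrand[OF assms(2,3)]
  unfolding K_form_def by (simp add: algebra_simps)

lemma K_form_lincomb_right:
  assumes "L2_on T u" "L2_on T v1" "L2_on T v2"
  shows "K_form u (\<lambda>s. a * v1 s + b * v2 s) = a * K_form u v1 + b * K_form u v2"
proof -
  have conv: "AE t in lborel. K_conv (\<lambda>s. a * v1 s + b * v2 s) t = a * K_conv v1 t + b * K_conv v2 t"
    using AE_integrable_K_conv_integrand[OF assms(2)] AE_integrable_K_conv_integrand[OF assms(3)]
    by eventually_elim (simp add: K_conv_def algebra_simps)
  have [measurable]: "(\<lambda>t. indicator {0..T} t * u t) \<in> borel_measurable borel"
    "K_conv v1 \<in> borel_measurable borel" "K_conv v2 \<in> borel_measurable borel"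
    "K_conv (\<lambda>s. a * v1 s + b * v2 s) \<in> borel_measurable borel"
    using L2_on_measurable[OF assms(1)] borel_measurable_K_conv[OF assms(2)]
      borel_measurable_K_conv[OF assms(3)] borel_measurable_K_conv[OF L2_on_lincomb[OF assms(2,3)]]
    by auto
  have "K_form u (\<lambda>s. a * v1 s + b * v2 s)
      = (\<integral>t. a * (indicator {0..T} t * u t * K_conv v1 t) + b * (indicator {0..T} t * u t * K_conv v2 t) \<partial>lborel)"
    unfolding K_form_def
  proof (rule integral_cong_AE)
    show "AE t in lborel. indicator {0..T} t * u t * K_conv (\<lambda>s. a * v1 s + b * v2 s) t
        = a * (indicator {0..T} t * u t * K_conv v1 t) + b * (indicator {0..T} t * u t * K_conv v2 t)"
      using conv by eventually_elim (simp add: algebra_simps)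
  qed measurable
  also have "\<dots> = a * K_form u v1 + b * K_form u v2"
    using integrable_K_form_integrand[OF assms(1,2)] integrable_K_form_integrand[OF assms(1,3)]
    unfolding K_form_def by simp
  finally show ?thesis .
qed

lemma K_form_diff_left:
  assumes "L2_on T u1" "L2_on T u2" "L2_on T v"
  shows "K_form (\<lambda>t. u1 t - u2 t) v = K_form u1 v - K_form u2 v"
  using K_form_lincomb_left[OF assms, of 1 "-1"] by simp

lemma K_form_diff_right:
  assumes "L2_on T u" "L2_on T v1" "L2_on T v2"
  shows "K_form u (\<lambda>s. v1 s - v2 s) = K_form u v1 - K_form u v2"
  using K_form_lincomb_right[OF assms, of 1 "-1"] by simp

lemma K_form_cmult_left: "K_form (\<lambda>t. c * u t) v = c * K_form u v"
  unfolding K_form_def by (simp add: ac_simps)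

lemma K_form_cmult_right: "K_form u (\<lambda>s. c * v s) = c * K_form u v"
proof -
  have "K_conv (\<lambda>s. c * v s) t = c * K_conv v t" for t
    unfolding K_conv_def by (simp add: ac_simps)
  then show ?thesis unfolding K_form_def by (simp add: ac_simps)
qed

text \<open>Rescaling \<open>u\<close> by \<open>r\<close> and \<open>v\<close> by \<open>1/r\<close> leaves \<open>K_form u v\<close> unchanged; optimising
  the bound of \<open>abs_K_form_le\<close> over \<open>r\<close> gives a Cauchy--Schwarz type bound.\<close>
lemma abs_K_form_le_sqrt:
  assumes u: "L2_on T u" and v: "L2_on T v"
  shows "\<bar>K_form u v\<bar> \<le> K_norm * sqrt (sqnorm T u) * sqrt (sqnorm T v)"
proof -
  have "\<bar>K_form u v\<bar> \<le> 2 * sqrt ((K_norm * sqnorm T u / 2) * (K_norm * sqnorm T v / 2))"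
  proof (rule le_two_sqrt_mult_if_le_scaled_sums)
    fix x :: real
    assume "x > 0"
    define r where "r = sqrt x"
    have r: "r > 0" "r\<^sup>2 = x" using \<open>x > 0\<close> by (auto simp: r_def)
    have "K_form u v = K_form (\<lambda>t. r * u t) (\<lambda>s. (1 / r) * v s)"
      using r by (simp only: K_form_cmult_left K_form_cmult_right) simp
    then have "2 * \<bar>K_form u v\<bar> \<le> K_norm * (sqnorm T (\<lambda>t. r * u t) + sqnorm T (\<lambda>s. (1 / r) * v s))"
      using abs_K_form_le[OF L2_on_cmult[OF u, of r] L2_on_cmult[OF v, of "1 / r"]] by (simp only:)
    also have "\<dots> = 2 * (K_norm * sqnorm T u / 2 * x + K_norm * sqnorm T v / 2 / x)"
      unfolding sqnorm_cmult using r by (simp add: field_simps power_one_over)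
    finally show "\<bar>K_form u v\<bar> \<le> K_norm * sqnorm T u / 2 * x + K_norm * sqnorm T v / 2 / x"
      by simp
  qed (use K_norm_nonneg sqnorm_nonneg in auto)
  also have "\<dots> = K_norm * sqrt (sqnorm T u) * sqrt (sqnorm T v)"
    using K_norm_nonneg sqnorm_nonneg[of T u] sqnorm_nonneg[of T v]
    by (simp add: real_sqrt_mult real_sqrt_divide)
  finally show ?thesis .
qed

lemma K_form_sum_left:
  assumes "finite I" "\<And>i. i \<in> I \<Longrightarrow> L2_on T (u i)" "L2_on T v"
  shows "K_form (\<lambda>t. \<Sum>i\<in>I. u i t) v = (\<Sum>i\<in>I. K_form (u i) v)"
  using assms
proof (induction I rule: finite_induct)
  case (insert i I)
  then show ?case
    using K_form_lincomb_left[of "u i" "\<lambda>t. \<Sum>i\<in>I. u i t" v 1 1] L2_on_sum[of I T u] by simp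
qed (simp add: K_form_def)

lemma K_form_sum_right:
  assumes "L2_on T u" "finite I" "\<And>i. i \<in> I \<Longrightarrow> L2_on T (v i)"
  shows "K_form u (\<lambda>s. \<Sum>i\<in>I. v i s) = (\<Sum>i\<in>I. K_form u (v i))"
  using assms(2,3)
proof (induction I rule: finite_induct)
  case (insert i I)
  then show ?case
    using K_form_lincomb_right[OF assms(1), of "v i" "\<lambda>s. \<Sum>i\<in>I. v i s" 1 1] L2_on_sum[of I T v] by simp
qed (simp add: K_form_def K_conv_def)

lemma K_form_indicator:
  assumes "x \<in> {0..T}" "y \<in> {0..T}"
  shows "K_form (indicator {0..x}) (indicator {0..y}) = (LBINT t:{0..x}. LBINT s:{0..y}. K (t - s))"
  unfolding K_form_def set_lebesgue_integral_def
proof (intro Bochner_Integration.integral_cong refl)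
  fix t
  have "t \<in> {0..x} \<Longrightarrow> K_conv (indicator {0..y}) t = (LBINT s. indicator {0..y} s *\<^sub>R K (t - s))"
    unfolding K_conv_def using assms
    by (intro Bochner_Integration.integral_cong) (auto simp: K_trunc_eq indicator_def)
  then show "indicator {0..T} t * indicator {0..x} t * K_conv (indicator {0..y}) t
      = indicator {0..x} t *\<^sub>R (LBINT s. indicator {0..y} s *\<^sub>R K (t - s))"
    using assms by (cases "t \<in> {0..x}") (auto simp: indicator_def)
qed

lemma K_form_tendsto:
  assumes u: "\<And>m. L2_on T (u m)" and v: "\<And>m. L2_on T (v m)" and f: "L2_on T f" and g: "L2_on T g"
    and uf: "(\<lambda>m. sqnorm T (\<lambda>t. u m t - f t)) \<longlonglongrightarrow> 0"
    and vg: "(\<lambda>m. sqnorm T (\<lambda>t. v m t - g t)) \<longlonglongrightarrow> 0"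
  shows "(\<lambda>m. K_form (u m) (v m)) \<longlonglongrightarrow> K_form f g"
  using uf vg
proof (rule LIMSEQ_if_abs_diff_le_bilinear)
  fix m
  have du: "L2_on T (\<lambda>t. u m t - f t)" and dv: "L2_on T (\<lambda>t. v m t - g t)"
    using u v f g by (auto intro: L2_on_diff)
  have "K_form (u m) (v m) - K_form f g
      = K_form (\<lambda>t. u m t - f t) (\<lambda>t. v m t - g t) + K_form (\<lambda>t. u m t - f t) g + K_form f (\<lambda>t. v m t - g t)"
    using u v f g du dv by (simp add: K_form_diff_left K_form_diff_right)
  then have "\<bar>K_form (u m) (v m) - K_form f g\<bar>
      \<le> \<bar>K_form (\<lambda>t. u m t - f t) (\<lambda>t. v m t - g t)\<bar> + \<bar>K_form (\<lambda>t. u m t - f t) g\<bar>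
        + \<bar>K_form f (\<lambda>t. v m t - g t)\<bar>"
    by arith
  also have "\<dots> \<le> K_norm * sqrt (sqnorm T (\<lambda>t. u m t - f t)) * sqrt (sqnorm T (\<lambda>t. v m t - g t))
      + K_norm * sqrt (sqnorm T (\<lambda>t. u m t - f t)) * sqrt (sqnorm T g)
      + K_norm * sqrt (sqnorm T f) * sqrt (sqnorm T (\<lambda>t. v m t - g t))"
    by (intro add_mono abs_K_form_le_sqrt du dv f g)
  finally show "\<bar>K_form (u m) (v m) - K_form f g\<bar>
      \<le> K_norm * (sqrt (sqnorm T (\<lambda>t. u m t - f t)) * sqrt (sqnorm T (\<lambda>t. v m t - g t))
        + sqrt (sqnorm T (\<lambda>t. u m t - f t)) * sqrt (sqnorm T g)
        + sqrt (sqnorm T f) * sqrt (sqnorm T (\<lambda>t. v m t - g t)))"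
    by (simp add: distrib_left mult.assoc)
qed

end

section \<open>The mean-square integral\<close>

lemma ms_integral_tendsto:
  assumes "ms_integral M B T f X" "\<And>m. partition_of T (n m) (p m)"
    and "(\<lambda>m. sqnorm T (\<lambda>t. step_fun (n m) (p m) (a m) t - f t)) \<longlonglongrightarrow> 0"
  shows "(\<lambda>m. \<integral>\<omega>. (riemann_sum B (n m) (p m) (a m) \<omega> - X \<omega>)\<^sup>2 \<partial>M) \<longlonglongrightarrow> 0"
  using assms unfolding ms_integral_def sqnorm_def by blast

locale kernel_covariance = integrable_kernel T K for T K +
  fixes M :: "'a measure" and B :: "real \<Rightarrow> 'a \<Rightarrow> real"
  assumes T_pos: "T > 0" and prob: "prob_space M"
    and B_square_integrable: "\<And>t. t \<in> {0..T} \<Longrightarrow> square_integrable M (B t)"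
    and covariance: "\<And>s t. s \<in> {0..T} \<Longrightarrow> t \<in> {0..T} \<Longrightarrow>
      (\<integral>\<omega>. B t \<omega> * B s \<omega> \<partial>M) = (LBINT u:{0..t}. LBINT v:{0..s}. K (u - v))"
begin

lemma expectation_increments_mult:
  assumes "x \<in> {0..T}" "x' \<in> {0..T}" "y \<in> {0..T}" "y' \<in> {0..T}"
  shows "(\<integral>\<omega>. (B x' \<omega> - B x \<omega>) * (B y' \<omega> - B y \<omega>) \<partial>M)
    = K_form (\<lambda>t. indicator {0..x'} t - indicator {0..x} t) (\<lambda>s. indicator {0..y'} s - indicator {0..y} s)"
proof -
  have "integrable M (\<lambda>\<omega>. B t \<omega> * B s \<omega>)" if "t \<in> {0..T}" "s \<in> {0..T}" for t s
    using that by (intro square_integrable_mult_integrable B_square_integrable)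
  then have "(\<integral>\<omega>. (B x' \<omega> - B x \<omega>) * (B y' \<omega> - B y \<omega>) \<partial>M)
      = (\<integral>\<omega>. B x' \<omega> * B y' \<omega> \<partial>M) - (\<integral>\<omega>. B x' \<omega> * B y \<omega> \<partial>M)
        - ((\<integral>\<omega>. B x \<omega> * B y' \<omega> \<partial>M) - (\<integral>\<omega>. B x \<omega> * B y \<omega> \<partial>M))"
    using assms by (simp add: left_diff_distrib right_diff_distrib)
  also have "\<dots> = K_form (indicator {0..x'}) (\<lambda>s. indicator {0..y'} s - indicator {0..y} s)
      - K_form (indicator {0..x}) (\<lambda>s. indicator {0..y'} s - indicator {0..y} s)"
    using assms by (simp add: covariance K_form_indicator K_form_diff_right L2_on_indicator)
  also have "\<dots> = K_form (\<lambda>t. indicator {0..x'} t - indicator {0..x} t) (\<lambda>s. indicator {0..y'} s - indicator {0..y} s)"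
    by (rule K_form_diff_left[symmetric]) (intro L2_on_indicator L2_on_diff)+
  finally show ?thesis .
qed

lemma expectation_riemann_sum_mult:
  assumes p: "partition_of T n p" and q: "partition_of T n' q"
  shows "(\<integral>\<omega>. riemann_sum B n p a \<omega> * riemann_sum B n' q b \<omega> \<partial>M) = K_form (step_fun n p a) (step_fun n' q b)"
proof -
  define dI where "dI r k t = (indicator {0..r (Suc k)} t - indicator {0..r k} t :: real)" for r :: "nat \<Rightarrow> real" and k t
  have range: "p k \<in> {0..T}" "p (Suc k) \<in> {0..T}" "q j \<in> {0..T}" "q (Suc j) \<in> {0..T}"
    if "k < n" "j < n'" for k j
    using that partition_of_range[OF p] partition_of_range[OF q] by auto
  have L2_dI: "L2_on T (dI p k)" "L2_on T (dI q j)" for k j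
    unfolding dI_def by (intro L2_on_diff L2_on_indicator)+
  have "(\<integral>\<omega>. riemann_sum B n p a \<omega> * riemann_sum B n' q b \<omega> \<partial>M)
      = (\<Sum>k<n. \<Sum>j<n'. a k * b j * (\<integral>\<omega>. (B (p (Suc k)) \<omega> - B (p k) \<omega>) * (B (q (Suc j)) \<omega> - B (q j) \<omega>) \<partial>M))"
  proof -
    have "integrable M (\<lambda>\<omega>. (B (p (Suc k)) \<omega> - B (p k) \<omega>) * (B (q (Suc j)) \<omega> - B (q j) \<omega>))"
      if "k < n" "j < n'" for k j
      using range[OF that] by (intro square_integrable_mult_integrable square_integrable_diff B_square_integrable)
    then show ?thesis
      unfolding riemann_sum_def sum_product
      by (subst Bochner_Integration.integral_sum) (auto intro!: sum.cong Bochner_Integration.integral_sum simp: ac_simps)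
  qed
  also have "\<dots> = (\<Sum>k<n. \<Sum>j<n'. a k * b j * K_form (dI p k) (dI q j))"
    unfolding dI_def using range by (intro sum.cong refl) (simp add: expectation_increments_mult)
  also have "\<dots> = K_form (\<lambda>t. \<Sum>k<n. a k * dI p k t) (\<lambda>s. \<Sum>j<n'. b j * dI q j s)"
  proof -
    have V: "L2_on T (\<lambda>s. \<Sum>j<n'. b j * dI q j s)"
      by (intro L2_on_sum L2_on_cmult L2_dI) simp
    have "K_form (\<lambda>t. \<Sum>k<n. a k * dI p k t) (\<lambda>s. \<Sum>j<n'. b j * dI q j s)
        = (\<Sum>k<n. a k * K_form (dI p k) (\<lambda>s. \<Sum>j<n'. b j * dI q j s))"
      using K_form_sum_left[of "{..<n}" "\<lambda>k t. a k * dI p k t", OF _ _ V]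
      by (simp add: L2_on_cmult L2_dI K_form_cmult_left)
    moreover have "K_form (dI p k) (\<lambda>s. \<Sum>j<n'. b j * dI q j s) = (\<Sum>j<n'. b j * K_form (dI p k) (dI q j))" for k
      using K_form_sum_right[OF L2_dI(1), of "{..<n'}" "\<lambda>j s. b j * dI q j s"]
      by (simp add: L2_on_cmult L2_dI K_form_cmult_right)
    ultimately show ?thesis by (simp add: sum_distrib_left ac_simps)
  qed
  also have "\<dots> = K_form (step_fun n p a) (step_fun n' q b)"
    unfolding dI_def step_fun_eq_sum_indicator_diff[OF p] step_fun_eq_sum_indicator_diff[OF q] ..
  finally show ?thesis .
qed

lemma square_integrable_riemann_sum:
  assumes "partition_of T n p"
  shows "square_integrable M (riemann_sum B n p a)"
  unfolding riemann_sum_def using partition_of_range[OF assms]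
  by (intro square_integrable_sum square_integrable_cmult square_integrable_diff B_square_integrable) auto

lemma mean_square_riemann_sum_diff_le:
  assumes p: "partition_of T n p" and q: "partition_of T n' q"
  shows "(\<integral>\<omega>. (riemann_sum B n p a \<omega> - riemann_sum B n' q b \<omega>)\<^sup>2 \<partial>M)
    \<le> K_norm * sqnorm T (\<lambda>t. step_fun n p a t - step_fun n' q b t)"
proof -
  let ?X = "riemann_sum B n p a" and ?Y = "riemann_sum B n' q b"
  let ?s = "step_fun n p a" and ?r = "step_fun n' q b"
  have X: "square_integrable M ?X" and Y: "square_integrable M ?Y"
    using p q by (auto intro: square_integrable_riemann_sum)
  have "(\<integral>\<omega>. (?X \<omega> - ?Y \<omega>)\<^sup>2 \<partial>M)
      = (\<integral>\<omega>. ?X \<omega> * ?X \<omega> \<partial>M) - (\<integral>\<omega>. ?X \<omega> * ?Y \<omega> \<partial>M) - ((\<integral>\<omega>. ?Y \<omega> * ?X \<omega> \<partial>M) - (\<integral>\<omega>. ?Y \<omega> * ?Y \<omega> \<partial>M))"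
  proof -
    have "(\<lambda>\<omega>. (?X \<omega> - ?Y \<omega>)\<^sup>2) = (\<lambda>\<omega>. ?X \<omega> * ?X \<omega> - ?X \<omega> * ?Y \<omega> - (?Y \<omega> * ?X \<omega> - ?Y \<omega> * ?Y \<omega>))"
      by (simp add: fun_eq_iff power2_eq_square algebra_simps)
    then show ?thesis
      using square_integrable_mult_integrable[OF X X] square_integrable_mult_integrable[OF X Y]
        square_integrable_mult_integrable[OF Y X] square_integrable_mult_integrable[OF Y Y]
      by (simp only: Bochner_Integration.integral_diff Bochner_Integration.integrable_diff)
  qed
  also have "\<dots> = K_form (\<lambda>t. ?s t - ?r t) (\<lambda>t. ?s t - ?r t)"
    using expectation_riemann_sum_mult[OF p p] expectation_riemann_sum_mult[OF p q]
      expectation_riemann_sum_mult[OF q p] expectation_riemann_sum_mult[OF q q]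
      K_form_diff_left[OF L2_on_step_fun L2_on_step_fun L2_on_diff[OF L2_on_step_fun L2_on_step_fun]]
      K_form_diff_right[of ?s ?s ?r] K_form_diff_right[of ?r ?s ?r]
    by (simp add: L2_on_step_fun)
  also have "\<dots> \<le> K_norm * sqrt (sqnorm T (\<lambda>t. ?s t - ?r t)) * sqrt (sqnorm T (\<lambda>t. ?s t - ?r t))"
    by (rule abs_K_form_le_sqrt[THEN abs_le_D1]) (intro L2_on_diff L2_on_step_fun)+
  also have "\<dots> = K_norm * sqnorm T (\<lambda>t. ?s t - ?r t)"
    using sqnorm_nonneg by (simp add: mult.assoc)
  finally show ?thesis .
qed

lemma mean_square_riemann_sum_diff_le_approx:
  assumes p: "partition_of T n p" and q: "partition_of T n' q" and f: "L2_on T f"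
  shows "(\<integral>\<omega>. (riemann_sum B n p a \<omega> - riemann_sum B n' q b \<omega>)\<^sup>2 \<partial>M)
    \<le> 2 * K_norm * sqnorm T (\<lambda>t. step_fun n p a t - f t) + 2 * K_norm * sqnorm T (\<lambda>t. step_fun n' q b t - f t)"
proof -
  have triangle: "sqnorm T (\<lambda>t. step_fun n p a t - step_fun n' q b t)
      \<le> 2 * sqnorm T (\<lambda>t. step_fun n p a t - f t) + 2 * sqnorm T (\<lambda>t. f t - step_fun n' q b t)"
    by (intro sqnorm_diff_le L2_on_step_fun f)
  have "K_norm * sqnorm T (\<lambda>t. step_fun n p a t - step_fun n' q b t)
      \<le> K_norm * (2 * sqnorm T (\<lambda>t. step_fun n p a t - f t) + 2 * sqnorm T (\<lambda>t. step_fun n' q b t - f t))"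
    using triangle sqnorm_diff_commute[of T f "step_fun n' q b"] K_norm_nonneg
    by (intro mult_left_mono) simp_all
  then show ?thesis
    using mean_square_riemann_sum_diff_le[OF p q, of a b] by (simp add: algebra_simps)
qed

lemma riemann_sum_mean_square_limit:
  assumes f: "L2_on T f" and p: "\<And>m. partition_of T (n m) (p m)"
    and approx: "(\<lambda>m. sqnorm T (\<lambda>t. step_fun (n m) (p m) (a m) t - f t)) \<longlonglongrightarrow> 0"
  obtains X where "square_integrable M X"
    "(\<lambda>m. \<integral>\<omega>. (riemann_sum B (n m) (p m) (a m) \<omega> - X \<omega>)\<^sup>2 \<partial>M) \<longlonglongrightarrow> 0"
proof -
  define \<delta> where "\<delta> m = 2 * K_norm * sqnorm T (\<lambda>t. step_fun (n m) (p m) (a m) t - f t)" for m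
  have \<delta>: "\<delta> \<longlonglongrightarrow> 0"
    unfolding \<delta>_def using tendsto_mult_left[OF approx, of "2 * K_norm"] by simp
  have "\<exists>N. \<forall>m\<ge>N. \<forall>k\<ge>N.
      (\<integral>\<omega>. (riemann_sum B (n m) (p m) (a m) \<omega> - riemann_sum B (n k) (p k) (a k) \<omega>)\<^sup>2 \<partial>M) < e"
    if "e > 0" for e
    using \<delta> that unfolding \<delta>_def
    by (rule Cauchy_bound_if_le_add[OF mean_square_riemann_sum_diff_le_approx[OF p p f]])
  then have "\<exists>X. square_integrable M X \<and>
      (\<lambda>m. \<integral>\<omega>. (riemann_sum B (n m) (p m) (a m) \<omega> - X \<omega>)\<^sup>2 \<partial>M) \<longlonglongrightarrow> 0"
    by (intro mean_square_Cauchy_imp_limit[OF prob] square_integrable_riemann_sum p)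
  then show ?thesis using that by blast
qed

lemma riemann_sum_tendsto_mean_square_limit:
  assumes f: "L2_on T f" and p: "\<And>m. partition_of T (n m) (p m)"
    and approx: "(\<lambda>m. sqnorm T (\<lambda>t. step_fun (n m) (p m) (a m) t - f t)) \<longlonglongrightarrow> 0"
    and X: "square_integrable M X"
    and lim: "(\<lambda>m. \<integral>\<omega>. (riemann_sum B (n m) (p m) (a m) \<omega> - X \<omega>)\<^sup>2 \<partial>M) \<longlonglongrightarrow> 0"
    and p': "\<And>m. partition_of T (n' m) (p' m)"
    and approx': "(\<lambda>m. sqnorm T (\<lambda>t. step_fun (n' m) (p' m) (a' m) t - f t)) \<longlonglongrightarrow> 0"
  shows "(\<lambda>m. \<integral>\<omega>. (riemann_sum B (n' m) (p' m) (a' m) \<omega> - X \<omega>)\<^sup>2 \<partial>M) \<longlonglongrightarrow> 0"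
proof -
  define Y where "Y m = riemann_sum B (n m) (p m) (a m)" for m
  define Y' where "Y' m = riemann_sum B (n' m) (p' m) (a' m)" for m
  define bound where "bound m = 2 * (2 * K_norm * sqnorm T (\<lambda>t. step_fun (n' m) (p' m) (a' m) t - f t)
    + 2 * K_norm * sqnorm T (\<lambda>t. step_fun (n m) (p m) (a m) t - f t)) + 2 * (\<integral>\<omega>. (Y m \<omega> - X \<omega>)\<^sup>2 \<partial>M)" for m
  have "bound \<longlonglongrightarrow> 2 * (2 * K_norm * 0 + 2 * K_norm * 0) + 2 * 0"
    unfolding bound_def Y_def by (intro tendsto_intros approx approx' lim)
  then have bound_lim: "bound \<longlonglongrightarrow> 0" by simp
  have "(\<integral>\<omega>. (Y' m \<omega> - X \<omega>)\<^sup>2 \<partial>M) \<le> bound m" for m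
  proof -
    have "(\<integral>\<omega>. (Y' m \<omega> - X \<omega>)\<^sup>2 \<partial>M)
        \<le> 2 * (\<integral>\<omega>. (Y' m \<omega> - Y m \<omega>)\<^sup>2 \<partial>M) + 2 * (\<integral>\<omega>. (Y m \<omega> - X \<omega>)\<^sup>2 \<partial>M)"
      unfolding Y'_def Y_def by (intro integral_square_diff_le square_integrable_riemann_sum p p' X)
    moreover have "(\<integral>\<omega>. (Y' m \<omega> - Y m \<omega>)\<^sup>2 \<partial>M)
        \<le> 2 * K_norm * sqnorm T (\<lambda>t. step_fun (n' m) (p' m) (a' m) t - f t)
          + 2 * K_norm * sqnorm T (\<lambda>t. step_fun (n m) (p m) (a m) t - f t)"
      unfolding Y'_def Y_def by (intro mean_square_riemann_sum_diff_le_approx p p' f)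
    ultimately show ?thesis unfolding bound_def by simp
  qed
  then show ?thesis
    unfolding Y'_def[symmetric]
    by (intro tendsto_sandwich[OF _ _ tendsto_const bound_lim] always_eventually allI) simp_all
qed

lemma ms_integral_exists:
  assumes f: "L2_on T f"
  shows "\<exists>X. ms_integral M B T f X"
proof -
  obtain n p a where p: "\<And>m. partition_of T (n m) (p m)"
    and approx: "(\<lambda>m. sqnorm T (\<lambda>t. step_fun (n m) (p m) (a m) t - f t)) \<longlonglongrightarrow> 0"
    by (rule step_fun_approx_sequence[OF T_pos f]) blast
  obtain X where X: "square_integrable M X"
    and lim: "(\<lambda>m. \<integral>\<omega>. (riemann_sum B (n m) (p m) (a m) \<omega> - X \<omega>)\<^sup>2 \<partial>M) \<longlonglongrightarrow> 0"
    by (rule riemann_sum_mean_square_limit[OF f p approx])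
  have "ms_integral M B T f X"
    unfolding ms_integral_def
  proof (intro conjI allI impI)
    show "X \<in> borel_measurable M" "integrable M (\<lambda>\<omega>. (X \<omega>)\<^sup>2)"
      using X unfolding square_integrable_def by auto
    fix n' p' a'
    assume "\<forall>m. partition_of T (n' m) (p' m)"
      and "(\<lambda>m. LBINT t:{0..T}. (step_fun (n' m) (p' m) (a' m) t - f t)\<^sup>2) \<longlonglongrightarrow> 0"
    then show "(\<lambda>m. \<integral>\<omega>. (riemann_sum B (n' m) (p' m) (a' m) \<omega> - X \<omega>)\<^sup>2 \<partial>M) \<longlonglongrightarrow> 0"
      by (intro riemann_sum_tendsto_mean_square_limit[OF f p approx X lim]) (simp_all add: sqnorm_def)
  qed
  then show ?thesis by blast
qed

lemma ms_integral_covariance: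
  assumes f: "L2_on T f" and g: "L2_on T g"
    and X: "ms_integral M B T f X" and Y: "ms_integral M B T g Y"
  shows "(\<integral>\<omega>. X \<omega> * Y \<omega> \<partial>M) = K_form f g"
proof -
  obtain n1 p1 a1 where p1: "\<And>m. partition_of T (n1 m) (p1 m)"
    and approx1: "(\<lambda>m. sqnorm T (\<lambda>t. step_fun (n1 m) (p1 m) (a1 m) t - f t)) \<longlonglongrightarrow> 0"
    by (rule step_fun_approx_sequence[OF T_pos f]) blast
  obtain n2 p2 a2 where p2: "\<And>m. partition_of T (n2 m) (p2 m)"
    and approx2: "(\<lambda>m. sqnorm T (\<lambda>t. step_fun (n2 m) (p2 m) (a2 m) t - g t)) \<longlonglongrightarrow> 0"
    by (rule step_fun_approx_sequence[OF T_pos g]) blast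
  have "(\<lambda>m. \<integral>\<omega>. (riemann_sum B (n1 m) (p1 m) (a1 m) \<omega> - X \<omega>)\<^sup>2 \<partial>M) \<longlonglongrightarrow> 0"
    "(\<lambda>m. \<integral>\<omega>. (riemann_sum B (n2 m) (p2 m) (a2 m) \<omega> - Y \<omega>)\<^sup>2 \<partial>M) \<longlonglongrightarrow> 0"
    by (rule ms_integral_tendsto[OF X p1 approx1], rule ms_integral_tendsto[OF Y p2 approx2])
  then have "(\<lambda>m. \<integral>\<omega>. riemann_sum B (n1 m) (p1 m) (a1 m) \<omega> * riemann_sum B (n2 m) (p2 m) (a2 m) \<omega> \<partial>M)
      \<longlonglongrightarrow> (\<integral>\<omega>. X \<omega> * Y \<omega> \<partial>M)"
    using X Y unfolding ms_integral_def
    by (intro integral_mult_tendsto_if_mean_square square_integrable_riemann_sum p1 p2)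
      (simp_all add: square_integrable_def)
  then have "(\<lambda>m. K_form (step_fun (n1 m) (p1 m) (a1 m)) (step_fun (n2 m) (p2 m) (a2 m)))
      \<longlonglongrightarrow> (\<integral>\<omega>. X \<omega> * Y \<omega> \<partial>M)"
    by (simp add: expectation_riemann_sum_mult[OF p1 p2])
  moreover have "(\<lambda>m. K_form (step_fun (n1 m) (p1 m) (a1 m)) (step_fun (n2 m) (p2 m) (a2 m))) \<longlonglongrightarrow> K_form f g"
    by (intro K_form_tendsto L2_on_step_fun f g approx1 approx2)
  ultimately show ?thesis by (rule LIMSEQ_unique)
qed

end

text \<open>Only square integrability of each \<open>B t\<close> (a consequence of Gaussianity) and the covariance
  identity enter the proof.\<close>
theorem lemma3p1:
  fixes M :: "'a measure" and B :: "real \<Rightarrow> 'a \<Rightarrow> real" and K :: "real \<Rightarrow> real" and T :: real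
  assumes "prob_space M"
    and "\<forall>t\<ge>0. B t \<in> borel_measurable M"
    and "centered_gaussian_process M B"
    and "stationary_increments M B"
    and "\<forall>\<omega>\<in>space M. B 0 \<omega> = 0"
    and "T > 0"
    and "\<forall>x. K (- x) = K x"
    and "set_integrable lborel {-T..T} K"
    and "\<forall>s\<in>{0..T}. \<forall>t\<in>{0..T}.
           (\<integral>\<omega>. B t \<omega> * B s \<omega> \<partial>M) = (LBINT u:{0..t}. LBINT v:{0..s}. K (u - v))"
  shows "(\<forall>f. L2_on T f \<longrightarrow> (\<exists>X. ms_integral M B T f X)) \<and>
         (\<forall>f g X Y. L2_on T f \<longrightarrow> L2_on T g \<longrightarrow> ms_integral M B T f X \<longrightarrow> ms_integral M B T g Y \<longrightarrow>
            (\<integral>\<omega>. X \<omega> * Y \<omega> \<partial>M) = (LBINT t:{0..T}. f t * (LBINT s:{0..T}. K (t - s) * g s)))"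
proof -
  have "square_integrable M (B t)" if "t \<in> {0..T}" for t
  proof (rule square_integrable_if_centered_gaussian)
    have "centered_gaussian M (\<lambda>\<omega>. \<Sum>i\<in>{t}. (\<lambda>_. 1::real) i * B i \<omega>)"
      using assms(3)[unfolded centered_gaussian_process_def, rule_format, of "{t}" "\<lambda>_. 1"] that by simp
    then show "centered_gaussian M (B t)" by simp
  qed
  then have "kernel_covariance T K M B"
  proof (intro kernel_covariance.intro kernel_covariance_axioms.intro)
    show "integrable_kernel T K" by (rule integrable_kernel.intro[OF assms(8)])
    show "T > 0" "prob_space M" by (fact assms(6,1))+
    show "(\<integral>\<omega>. B t \<omega> * B s \<omega> \<partial>M) = (LBINT u:{0..t}. LBINT v:{0..s}. K (u - v))"
      if "s \<in> {0..T}" "t \<in> {0..T}" for s t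
      using assms(9) that by blast
  qed
  then interpret kernel_covariance T K M B .
  show ?thesis
    using ms_integral_exists ms_integral_covariance unfolding K_form_eq_double_integral by blast
qed

end
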